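(* For every language $L\subseteq\{0,1\}^*$ (not necessarily recursive), $L\in QIP/qpoly$. More strongly, $L$ has a one-round quantum interactive proof with polynomial-size quantum advice in which all messages are classical ($L\in QIP(2)^*/qpoly$), with perfect completeness and soundness error at most $1/n^{\Omega(1)}$ on inputs of length $n$.
   Context: $QIP/qpoly$ is the class of languages $L$ having polynomial-size quantum interactive proofs (in the sense of Watrous) in which the verifier is a polynomial-size quantum circuit whose working space is initialized with an arbitrary quantum state $|\Psi_{L,n}\rangle$ on $poly(n)$ qubits (the quantum advice) that depends only on $L$ and the input length $n$, not on the input itself. The prover is computationally unbounded. Completeness: for $x\in L$ some prover strategy makes the verifier accept with probability $\ge 1-\epsilon$. Soundness: for $x\notin L$ every prover strategy makes the verifier accept with probability $\le\epsilon$, for a small constant $\epsilon$. $QIP(2)^*/qpoly$ is the subclass of such proofs with one round and classical messages. The verifier (a $BQP/qpoly$ circuit) sends a classical question $q$ of $poly(n)$ bits, which may depend on $x$ and on measurement outcomes. The prover answers with a classical string $r$ of $poly(n)$ bits. The verifier then outputs Accept or Reject. *)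

theory Defs
  imports Complex_Main
begin

text \<open>A (not necessarily normalised) pure state on m qubits is an amplitude function on
  bit strings; it is meant to vanish outside the strings of length m.
  Bit i of a basis string s is s ! i.\<close>

type_synonym qstate = "bool list \<Rightarrow> complex"

definition basis :: "bool list \<Rightarrow> qstate" where
  "basis b = (\<lambda>s. if s = b then 1 else 0)"

definition tensor :: "nat \<Rightarrow> qstate \<Rightarrow> qstate \<Rightarrow> qstate" where
  "tensor m \<phi> \<psi> = (\<lambda>s. \<phi> (take m s) * \<psi> (drop m s))"

definition sqnorm :: "nat \<Rightarrow> qstate \<Rightarrow> real" where
  "sqnorm m \<phi> = (\<Sum>s\<in>{s. length s = m}. (cmod (\<phi> s))\<^sup>2)"

definition is_state :: "nat \<Rightarrow> qstate \<Rightarrow> bool" where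
  "is_state m \<phi> \<longleftrightarrow> (\<forall>s. length s \<noteq> m \<longrightarrow> \<phi> s = 0) \<and> sqnorm m \<phi> = 1"

text \<open>A gate is an arbitrary two-qubit unitary U acting on the ordered pair of distinct
  qubits (i, j); U c d a b is the matrix entry <c d| U |a b>.  One-qubit gates are the
  special case U = V \<otimes> I.\<close>

type_synonym gate = "nat \<times> nat \<times> (bool \<Rightarrow> bool \<Rightarrow> bool \<Rightarrow> bool \<Rightarrow> complex)"

definition unitary2 :: "(bool \<Rightarrow> bool \<Rightarrow> bool \<Rightarrow> bool \<Rightarrow> complex) \<Rightarrow> bool" where
  "unitary2 U \<longleftrightarrow> (\<forall>a b a' b'.
     (\<Sum>c\<in>UNIV. \<Sum>d\<in>UNIV. cnj (U c d a b) * U c d a' b') = (if a = a' \<and> b = b' then 1 else 0))"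

definition valid_gate :: "nat \<Rightarrow> gate \<Rightarrow> bool" where
  "valid_gate m g = (case g of (i, j, U) \<Rightarrow> i < m \<and> j < m \<and> i \<noteq> j \<and> unitary2 U)"

definition apply_gate :: "gate \<Rightarrow> qstate \<Rightarrow> qstate" where
  "apply_gate g \<phi> = (case g of (i, j, U) \<Rightarrow>
     (\<lambda>s. \<Sum>a\<in>UNIV. \<Sum>b\<in>UNIV. U (s ! i) (s ! j) a b * \<phi> (s[i := a, j := b])))"

definition valid_circuit :: "nat \<Rightarrow> gate list \<Rightarrow> bool" where
  "valid_circuit m C \<longleftrightarrow> (\<forall>g\<in>set C. valid_gate m g)"

definition run_circuit :: "gate list \<Rightarrow> qstate \<Rightarrow> qstate" where
  "run_circuit C \<phi> = fold apply_gate C \<phi>"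

text \<open>Unnormalised post-measurement state when the first k qubits are measured in the
  computational basis with outcome q.\<close>
definition proj_prefix :: "nat \<Rightarrow> bool list \<Rightarrow> qstate \<Rightarrow> qstate" where
  "proj_prefix k q \<phi> = (\<lambda>s. if take k s = q then \<phi> s else 0)"

text \<open>Verifier for input length n (non-uniform, as in BQP/qpoly):
  \<^item> register layout for phase 1: input x (n qubits), advice \<Psi> n (a n qubits),
    z n ancillas initialised to |0>; total m1 n = n + a n + z n qubits;
  \<^item> circuit V1 n on m1 n qubits, then the first k n qubits are measured: the outcome q is the
    classical question sent to the prover;
  \<^item> the prover's classical answer r = P q (of length l n) is written into l n fresh qubits
    appended at the end; circuit V2 n acts on the m1 n + l n qubits; the verifier accepts
    iff measuring the first qubit yields 1 (True).
  The prover is an arbitrary (deterministic) function from questions to answers; the input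
  x is fixed before the prover is chosen, so the prover may depend on x.\<close>

definition acc_prob ::
  "nat \<Rightarrow> nat \<Rightarrow> nat \<Rightarrow> nat \<Rightarrow> qstate \<Rightarrow> gate list \<Rightarrow> gate list
     \<Rightarrow> bool list \<Rightarrow> (bool list \<Rightarrow> bool list) \<Rightarrow> real" where
  "acc_prob a z k l \<Psi> V1 V2 x P =
    (let n = length x; m1 = n + a + z;
         \<phi> = run_circuit V1 (tensor n (basis x) (tensor a \<Psi> (basis (replicate z False))))
     in \<Sum>q\<in>{q. length q = k}.
          sqnorm (m1 + l)
            (proj_prefix 1 [True] (run_circuit V2 (tensor m1 (proj_prefix k q \<phi>) (basis (P q))))))"

definition QIP2star_qpoly_perfect :: "(nat \<Rightarrow> real) \<Rightarrow> bool list set \<Rightarrow> bool" where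
  "QIP2star_qpoly_perfect s L \<longleftrightarrow>
    (\<exists>(d::nat) (a::nat \<Rightarrow> nat) (z::nat \<Rightarrow> nat) (k::nat \<Rightarrow> nat) (l::nat \<Rightarrow> nat)
       (\<Psi>::nat \<Rightarrow> qstate) (V1::nat \<Rightarrow> gate list) (V2::nat \<Rightarrow> gate list).
       (\<forall>n. a n \<le> (n + 2) ^ d \<and> z n \<le> (n + 2) ^ d \<and> k n \<le> (n + 2) ^ d \<and> l n \<le> (n + 2) ^ d
          \<and> length (V1 n) \<le> (n + 2) ^ d \<and> length (V2 n) \<le> (n + 2) ^ d
          \<and> k n \<le> n + a n + z n
          \<and> is_state (a n) (\<Psi> n)
          \<and> valid_circuit (n + a n + z n) (V1 n)
          \<and> valid_circuit (n + a n + z n + l n) (V2 n)) \<and>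
       (\<forall>x\<in>L. \<exists>P. acc_prob (a (length x)) (z (length x)) (k (length x)) (l (length x))
                    (\<Psi> (length x)) (V1 (length x)) (V2 (length x)) x P = 1) \<and>
       (\<forall>x. x \<notin> L \<longrightarrow> (\<forall>P. acc_prob (a (length x)) (z (length x)) (k (length x)) (l (length x))
                    (\<Psi> (length x)) (V1 (length x)) (V2 (length x)) x P \<le> s (length x))))"

end

theory Submission
  imports Defs "HOL-Computational_Algebra.Primes" "HOL-Computational_Algebra.Polynomial" "HOL-Number_Theory.Cong"
begin

text \<open>Let \<open>p > 3 (n + 1)\<^sup>2\<close> be a prime of polynomial size and \<open>f\<close> the multilinear
  extension of the indicator of \<open>L\<close> on inputs of length \<open>n\<close>, read modulo \<open>p\<close>. The advice is the
  uniform superposition, over \<open>t \<noteq> 0\<close>, \<open>a \<in> Z\<^sub>p\<^sup>n\<close> and \<open>j \<in> Z\<^sub>p\<close>, of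
  \<open>\<omega>\<^bsup>j (1 - f (t a))\<^esup> |a\<rangle> |a - 1/t\<rangle> |j, t\<rangle>\<close> with \<open>\<omega> = e\<^bsup>2\<pi>i/p\<^esup>\<close>. For each \<open>i\<close> the verifier
  erases one of \<open>a\<^sub>i\<close>, \<open>a\<^sub>i - 1/t\<close> according to \<open>x\<^sub>i\<close> (Hadamards, then measurement) and thereby
  learns a direction \<open>d\<close> with \<open>t a = x + t d\<close>, while \<open>t\<close> stays uniformly random and hidden. It asks
  the prover for the non-constant part \<open>h\<close> of \<open>f (x + \<tau> d)\<close>, a polynomial of degree at most \<open>n\<close>
  in \<open>\<tau>\<close>, kicks back the phase \<open>\<omega>\<^bsup>j h(t)\<^esup>\<close> and checks by an inverse Fourier transform over \<open>j\<close>
  that \<open>1 + h(t) = f (t a)\<close>. For \<open>x \<in> L\<close> we have \<open>f x = 1\<close> and the honest answer always passes.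
  For \<open>x \<notin> L\<close> the polynomial \<open>1 + h\<close> differs from \<open>f (x + \<tau> d)\<close> at \<open>\<tau> = 0\<close>, so the two
  agree for at most \<open>n\<close> of the \<open>p - 1\<close> values of \<open>t\<close>, and the verifier accepts with probability
  at most \<open>n / (p - 1) < 1 / (3 (n + 1))\<close>.\<close>

section \<open>A prime of polynomial size\<close>

lemma multiplicity_less_self:
  fixes p x :: nat
  assumes "prime p" "x > 0"
  shows "multiplicity p x < x"
proof -
  have "p ^ multiplicity p x dvd x" by (rule multiplicity_dvd)
  then have "p ^ multiplicity p x \<le> x" using assms(2) by (simp add: dvd_imp_le)
  moreover have "multiplicity p x < 2 ^ multiplicity p x" by (rule less_exp)
  moreover have "2 ^ multiplicity p x \<le> p ^ multiplicity p x"
    using prime_ge_2_nat[OF assms(1)] by (rule power_mono) simp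
  ultimately show ?thesis by linarith
qed

lemma sum_prime_power_dvd_eq_multiplicity:
  fixes p x N :: nat
  assumes "prime p" "x > 0" "x \<le> N"
  shows "(\<Sum>i\<in>{1..N}. if p ^ i dvd x then 1 else 0) = multiplicity p x"
proof -
  have dvd_iff: "p ^ i dvd x \<longleftrightarrow> i \<le> multiplicity p x" for i
    using assms(1,2) by (intro power_dvd_iff_le_multiplicity) (use prime_gt_1_nat[of p] in simp_all)
  have "multiplicity p x \<le> N" using multiplicity_less_self[OF assms(1,2)] assms(3) by linarith
  then have "{i\<in>{1..N}. p ^ i dvd x} = {1..multiplicity p x}"
    unfolding dvd_iff by auto
  moreover have "(\<Sum>i\<in>{1..N}. if p ^ i dvd x then 1 else 0) = card {i\<in>{1..N}. p ^ i dvd x}"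
    by (simp only: sum.inter_filter[symmetric] finite_atLeastAtMost card_eq_sum)
  ultimately show ?thesis by simp
qed

lemma multiplicity_fact_eq_sum_div:
  fixes p n N :: nat
  assumes "prime p" "n \<le> N"
  shows "multiplicity p (fact n) = (\<Sum>i\<in>{1..N}. n div p ^ i)"
  using assms(2)
proof (induction n)
  case 0
  then show ?case by simp
next
  case (Suc n)
  have "multiplicity p (fact (Suc n) :: nat) = multiplicity p (Suc n) + multiplicity p (fact n :: nat)"
    unfolding fact_Suc of_nat_id using assms(1) by (intro prime_elem_multiplicity_mult_distrib) auto
  also have "\<dots> = (\<Sum>i\<in>{1..N}. if p ^ i dvd Suc n then 1 else 0) + (\<Sum>i\<in>{1..N}. n div p ^ i)"
    using sum_prime_power_dvd_eq_multiplicity[OF assms(1), of "Suc n" N] Suc by simp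
  also have "\<dots> = (\<Sum>i\<in>{1..N}. (if p ^ i dvd Suc n then 1 else 0) + n div p ^ i)"
    by (rule sum.distrib[symmetric])
  also have "\<dots> = (\<Sum>i\<in>{1..N}. Suc n div p ^ i)"
    by (intro sum.cong refl) (simp add: div_Suc dvd_eq_mod_eq_0)
  finally show ?case .
qed

lemma double_div_le:
  fixes m q :: nat
  assumes "q > 0"
  shows "(2 * m) div q \<le> 2 * (m div q) + 1"
proof -
  have "m < m div q * q + q"
    using mod_less_divisor[OF assms, of m] div_mult_mod_eq[of m q] by linarith
  then have "2 * m < (2 * (m div q) + 2) * q" by (simp add: algebra_simps)
  then have "(2 * m) div q < 2 * (m div q) + 2" by (rule less_mult_imp_div_less)
  then show ?thesis by simp
qed

lemma prime_power_multiplicity_central_binomial_le: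
  fixes p m :: nat
  assumes "prime p" "m > 0"
  shows "p ^ multiplicity p ((2 * m) choose m) \<le> 2 * m"
proof (rule ccontr)
  define v where "v = multiplicity p ((2 * m) choose m)"
  assume "\<not> p ^ multiplicity p ((2 * m) choose m) \<le> 2 * m"
  then have big: "2 * m < p ^ v" unfolding v_def by simp
  have "fact (2 * m) = fact m * fact m * ((2 * m) choose m)"
    using binomial_fact_lemma[of m "2 * m"] by simp
  then have "multiplicity p (fact (2 * m) :: nat) = 2 * multiplicity p (fact m :: nat) + v"
    unfolding v_def using assms(1) by (simp add: prime_elem_multiplicity_mult_distrib)
  then have eq: "(\<Sum>i\<in>{1..2 * m}. (2 * m) div p ^ i) = 2 * (\<Sum>i\<in>{1..2 * m}. m div p ^ i) + v"
    using multiplicity_fact_eq_sum_div[OF assms(1), of "2 * m" "2 * m"]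
      multiplicity_fact_eq_sum_div[OF assms(1), of m "2 * m"] by simp
  txt \<open>Only the terms with \<open>i < v\<close> can exceed twice the corresponding term for \<open>m\<close>, by one.\<close>
  have "(2 * m) div p ^ i \<le> 2 * (m div p ^ i) + (if i < v then 1 else 0)" for i
  proof (cases "i < v")
    case False
    then have "p ^ v \<le> p ^ i" using prime_gt_0_nat[OF assms(1)] by (simp add: power_increasing)
    then show ?thesis using big by simp
  qed (use double_div_le[of "p ^ i" m] prime_gt_0_nat[OF assms(1)] in simp)
  then have "(\<Sum>i\<in>{1..2 * m}. (2 * m) div p ^ i)
      \<le> (\<Sum>i\<in>{1..2 * m}. 2 * (m div p ^ i) + (if i < v then 1 else 0))"
    by (rule sum_mono)
  also have "\<dots> = 2 * (\<Sum>i\<in>{1..2 * m}. m div p ^ i) + card ({1..2 * m} \<inter> {..<v})"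
    by (simp add: sum.distrib sum_distrib_left sum.If_cases Int_def lessThan_def)
  finally have "v \<le> card ({1..2 * m} \<inter> {..<v})" using eq by simp
  moreover have "card ({1..2 * m} \<inter> {..<v}) \<le> card {1..<v}" by (intro card_mono) auto
  ultimately have "v = 0" by simp
  then show False using big assms(2) by simp
qed

lemma eight_square_less_power16: "(N::nat) \<ge> 1 \<Longrightarrow> 8 * N ^ 2 < 16 ^ N"
proof (induction N rule: dec_induct)
  case (step N)
  have "N \<le> N * N" "1 \<le> N * N" using step(1) by (simp_all add: Suc_le_eq)
  have "8 * (Suc N) ^ 2 = 8 * (N * N) + 16 * N + 8" by (simp add: power2_eq_square algebra_simps)
  also have "\<dots> \<le> 128 * (N * N)" using \<open>N \<le> N * N\<close> \<open>1 \<le> N * N\<close> by linarith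
  also have "\<dots> = 16 * (8 * N ^ 2)" by (simp add: power2_eq_square)
  also have "\<dots> < 16 * 16 ^ N" using step(3) by simp
  finally show ?case by simp
qed simp

lemma central_binomial_le_power:
  fixes m N :: nat
  assumes "m > 0" and small: "\<And>q. q \<in> prime_factors ((2 * m) choose m) \<Longrightarrow> q \<le> N"
  shows "(2 * m) choose m \<le> (2 * m) ^ N"
proof -
  define B where "B = (2 * m) choose m"
  have "prime_factors B \<subseteq> {1..N}"
    using small unfolding B_def by (auto simp: Suc_le_eq in_prime_factors_iff prime_gt_0_nat)
  then have card: "card (prime_factors B) \<le> N" using card_mono[of "{1..N}"] by fastforce
  have "B = (\<Prod>q\<in>prime_factors B. q ^ multiplicity q B)"
    by (rule prime_factorization_nat) (simp add: B_def)
  also have "\<dots> \<le> (\<Prod>q\<in>prime_factors B. 2 * m)"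
    by (intro prod_mono) (auto simp: B_def assms(1) intro!: prime_power_multiplicity_central_binomial_le
      dest: in_prime_factors_imp_prime)
  also have "\<dots> = (2 * m) ^ card (prime_factors B)" by simp
  also have "\<dots> \<le> (2 * m) ^ N" using card assms(1) by (intro power_increasing) auto
  finally show ?thesis unfolding B_def .
qed

text \<open>A weak form of Bertrand's postulate, by Erdos' argument: if no prime lies in
  \<open>(N, 8 N\<^sup>2]\<close>, the central binomial coefficient \<open>C(2m, m)\<close> with \<open>m = 4 N\<^sup>2\<close> would be at
  most \<open>(2m)\<^sup>N\<close>, contradicting \<open>C(2m, m) \<ge> 2\<^sup>m\<close>.\<close>
lemma exists_prime_between_square:
  fixes N :: nat
  assumes "N \<ge> 1"
  shows "\<exists>q. prime q \<and> N < q \<and> q \<le> 8 * N ^ 2"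
proof (rule ccontr)
  assume no_prime: "\<not> ?thesis"
  define m where "m = 4 * N ^ 2"
  have m0: "m > 0" using assms unfolding m_def by simp
  have "q \<le> N" if "q \<in> prime_factors ((2 * m) choose m)" for q
  proof -
    have "(2 * m) choose m dvd fact (2 * m)"
      using binomial_fact_lemma[of m "2 * m"] by (metis dvd_triv_right le_add2 mult_2)
    then have "q dvd fact (2 * m)" using that by (auto intro: dvd_trans)
    then have "q \<le> 8 * N ^ 2"
      using that prime_dvd_fact_iff[of q] unfolding m_def by (auto dest: in_prime_factors_imp_prime)
    then show ?thesis using no_prime that by (meson in_prime_factors_imp_prime not_le)
  qed
  then have upper: "(2 * m) choose m \<le> (2 * m) ^ N" by (rule central_binomial_le_power[OF m0])
  have lower: "2 ^ m \<le> (2 * m) choose m"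
    using binomial_ge_n_over_k_pow_k[of m "2 * m", where 'a = real] m0 by simp
  have "(2 * m) ^ N = (8 * N ^ 2) ^ N" unfolding m_def by simp
  also have "\<dots> < (16 ^ N) ^ N"
    using eight_square_less_power16[OF assms] assms by (intro power_strict_mono) auto
  also have "\<dots> = (2 ^ 4) ^ (N * N)" by (simp flip: power_mult)
  also have "\<dots> = 2 ^ (4 * (N * N))" by (simp only: power_mult)
  also have "\<dots> = 2 ^ m" unfolding m_def by (simp add: power2_eq_square)
  finally show False using upper lower by simp
qed

section \<open>Two-qubit gates\<close>

lemma sum_bool: "(\<Sum>a\<in>(UNIV::bool set). f a) = f False + f True"
  by (simp add: UNIV_bool add.commute)

lemma apply_gate_triple: "apply_gate (i, j, U) \<phi> s =
   (\<Sum>a\<in>UNIV. \<Sum>b\<in>UNIV. U (s ! i) (s ! j) a b * \<phi> (s[i := a, j := b]))"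
  by (simp add: apply_gate_def)

definition diag_mat :: "(bool \<Rightarrow> bool \<Rightarrow> complex) \<Rightarrow> bool \<Rightarrow> bool \<Rightarrow> bool \<Rightarrow> bool \<Rightarrow> complex" where
  "diag_mat D = (\<lambda>c d a b. if a = c \<and> b = d then D c d else 0)"

lemma apply_diag: "apply_gate (i, j, diag_mat D) \<phi> s = D (s ! i) (s ! j) * \<phi> s"
proof -
  have "apply_gate (i, j, diag_mat D) \<phi> s = D (s ! i) (s ! j) * \<phi> (s[i := s ! i, j := s ! j])"
    unfolding apply_gate_triple diag_mat_def sum_bool by (cases "s ! i"; cases "s ! j") auto
  thus ?thesis by (simp only: list_update_id)
qed

definition swap_mat :: "bool \<Rightarrow> bool \<Rightarrow> bool \<Rightarrow> bool \<Rightarrow> complex" where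
  "swap_mat = (\<lambda>c d a b. if a = d \<and> b = c then 1 else 0)"

lemma apply_swap: "apply_gate (i, j, swap_mat) \<phi> s = \<phi> (s[i := s ! j, j := s ! i])"
  unfolding apply_gate_triple swap_mat_def sum_bool by (cases "s ! i"; cases "s ! j") auto

definition cnot_mat :: "bool \<Rightarrow> bool \<Rightarrow> bool \<Rightarrow> bool \<Rightarrow> complex" where
  "cnot_mat = (\<lambda>c d a b. if a = c \<and> b = (d \<noteq> c) then 1 else 0)"

lemma apply_cnot: "apply_gate (i, j, cnot_mat) \<phi> s = \<phi> (s[j := (s ! j \<noteq> s ! i)])"
proof -
  have "apply_gate (i, j, cnot_mat) \<phi> s = \<phi> (s[i := s ! i, j := (s ! j \<noteq> s ! i)])"
    unfolding apply_gate_triple cnot_mat_def sum_bool by (cases "s ! i"; cases "s ! j") auto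
  thus ?thesis by (simp only: list_update_id)
qed

definition ctrl_mat :: "bool \<Rightarrow> (bool \<Rightarrow> bool \<Rightarrow> complex) \<Rightarrow> bool \<Rightarrow> bool \<Rightarrow> bool \<Rightarrow> bool \<Rightarrow> complex" where
  "ctrl_mat cv V = (\<lambda>c d a b. if a = c then (if c = cv then V d b else (if d = b then 1 else 0)) else 0)"

lemma apply_ctrl: "apply_gate (i, j, ctrl_mat cv V) \<phi> s =
   (if s ! i = cv then (\<Sum>b\<in>UNIV. V (s ! j) b * \<phi> (s[j := b])) else \<phi> s)"
proof -
  have "apply_gate (i, j, ctrl_mat cv V) \<phi> s =
   (if s ! i = cv then (\<Sum>b\<in>UNIV. V (s ! j) b * \<phi> (s[i := s ! i, j := b])) else \<phi> (s[i := s ! i, j := s ! j]))"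
    unfolding apply_gate_triple ctrl_mat_def sum_bool by (cases "s ! i"; cases "s ! j"; cases cv) auto
  thus ?thesis by (simp only: list_update_id)
qed

definition givens_mat :: "real \<Rightarrow> real \<Rightarrow> bool \<Rightarrow> bool \<Rightarrow> bool \<Rightarrow> bool \<Rightarrow> complex" where
  "givens_mat gc gs = (\<lambda>c d a b.
     if c = d then (if a = c \<and> b = d then 1 else 0)
     else if c then (if a \<and> \<not> b then of_real gc else if \<not> a \<and> b then of_real gs else 0)
     else (if a \<and> \<not> b then - of_real gs else if \<not> a \<and> b then of_real gc else 0))"

lemma apply_givens: assumes "i \<noteq> j"
  shows "apply_gate (i, j, givens_mat gc gs) \<phi> s =
   (if s ! i = s ! j then \<phi> s
    else if s ! i then of_real gc * \<phi> s + of_real gs * \<phi> (s[i := False, j := True])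
    else - of_real gs * \<phi> (s[i := True, j := False]) + of_real gc * \<phi> s)"
proof -
  have "apply_gate (i, j, givens_mat gc gs) \<phi> s =
   (if s ! i = s ! j then \<phi> (s[i := s ! i, j := s ! j])
    else if s ! i then of_real gc * \<phi> (s[i := s ! i, j := s ! j]) + of_real gs * \<phi> (s[i := False, j := True])
    else - of_real gs * \<phi> (s[i := True, j := False]) + of_real gc * \<phi> (s[i := s ! i, j := s ! j]))"
    unfolding apply_gate_triple givens_mat_def sum_bool by (cases "s ! i"; cases "s ! j") auto
  thus ?thesis by (simp only: list_update_id)
qed

definition hadamard :: "bool \<Rightarrow> bool \<Rightarrow> complex" where
  "hadamard y b = (if y \<and> b then -1 else 1) / complex_of_real (sqrt 2)"

lemma norm_hadamard_sq: "(cmod (hadamard y b))\<^sup>2 = 1 / 2"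
  unfolding hadamard_def by (simp add: norm_divide power_divide)

lemma sum_bool2: "(\<Sum>c\<in>(UNIV::bool set). \<Sum>d\<in>(UNIV::bool set). f c d) = f False False + f False True + f True False + f True True"
  by (simp add: sum_bool add.assoc)

lemma unitary_diag: assumes "\<And>a b. cmod (D a b) = 1" shows "unitary2 (diag_mat D)"
proof -
  have c: "cnj (D a b) * D a b = 1" for a b
  proof -
    have "cnj (D a b) * D a b = D a b * cnj (D a b)" by (simp add: mult.commute)
    also have "\<dots> = of_real ((cmod (D a b))\<^sup>2)" by (rule complex_norm_square[symmetric])
    also have "\<dots> = 1" using assms[of a b] by simp
    finally show ?thesis .
  qed
  show ?thesis unfolding unitary2_def diag_mat_def sum_bool2 using c by simp
qed

lemma unitary_ctrl_hadamard: "unitary2 (ctrl_mat cv hadamard)"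
proof -
  have s: "complex_of_real (sqrt 2) * complex_of_real (sqrt 2) = 2"
    by (simp flip: of_real_mult)
  have h: "cnj (1 / complex_of_real (sqrt 2)) * (1 / complex_of_real (sqrt 2)) = 1 / 2"
    using s by simp
  have h2: "cnj (- 1 / complex_of_real (sqrt 2)) * (- 1 / complex_of_real (sqrt 2)) = 1 / 2"
    using s by simp
  have h3: "cnj (- 1 / complex_of_real (sqrt 2)) * (1 / complex_of_real (sqrt 2)) = - 1 / 2"
    using s by simp
  have h4: "cnj (1 / complex_of_real (sqrt 2)) * (- 1 / complex_of_real (sqrt 2)) = - 1 / 2"
    using s by simp
  show ?thesis unfolding unitary2_def ctrl_mat_def hadamard_def sum_bool2
    by (cases cv) (simp_all add: h h2 h3 h4 s)
qed

lemma unitary_givens: assumes "gc ^ 2 + gs ^ 2 = 1" shows "unitary2 (givens_mat gc gs)"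
proof -
  have a: "complex_of_real gc * complex_of_real gc + complex_of_real gs * complex_of_real gs = 1"
    using assms by (simp add: power2_eq_square flip: of_real_mult of_real_add)
  show ?thesis unfolding unitary2_def givens_mat_def sum_bool2
    using a by (simp add: algebra_simps)
qed

lemma unitary_swap: "unitary2 swap_mat"
  unfolding unitary2_def swap_mat_def sum_bool2 by simp

lemma unitary_cnot: "unitary2 cnot_mat"
  unfolding unitary2_def cnot_mat_def sum_bool2 by simp

section \<open>Circuits, linearity and tensor products\<close>

lemma run_circuit_Nil[simp]: "run_circuit [] \<phi> = \<phi>" by (simp add: run_circuit_def)
lemma run_circuit_Cons[simp]: "run_circuit (g # C) \<phi> = run_circuit C (apply_gate g \<phi>)"
  by (simp add: run_circuit_def)
lemma run_circuit_append: "run_circuit (C @ D) \<phi> = run_circuit D (run_circuit C \<phi>)"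
  by (simp add: run_circuit_def)

lemma apply_gate_sum:
  assumes "finite K"
  shows "apply_gate g (\<lambda>s. \<Sum>\<kappa>\<in>K. c \<kappa> * f \<kappa> s) = (\<lambda>s. \<Sum>\<kappa>\<in>K. c \<kappa> * apply_gate g (f \<kappa>) s)"
proof -
  obtain i j U where g: "g = (i, j, U)" by (cases g) auto
  show ?thesis unfolding g apply_gate_triple
    by (rule ext) (simp add: sum_distrib_left sum.swap[of _ K] mult.left_commute)
qed

lemma run_circuit_sum:
  assumes "finite K"
  shows "run_circuit C (\<lambda>s. \<Sum>\<kappa>\<in>K. c \<kappa> * f \<kappa> s) = (\<lambda>s. \<Sum>\<kappa>\<in>K. c \<kappa> * run_circuit C (f \<kappa>) s)"
proof (induction C arbitrary: f)
  case Nil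
  then show ?case by simp
next
  case (Cons g C)
  show ?case using Cons[of "\<lambda>\<kappa>. apply_gate g (f \<kappa>)"] by (simp add: apply_gate_sum[OF assms])
qed

lemma apply_gate_tensor_left:
  assumes "i < k" "j < k"
  shows "apply_gate (i, j, U) (tensor k \<phi> \<psi>) = tensor k (apply_gate (i, j, U) \<phi>) \<psi>"
proof (rule ext)
  fix s :: "bool list"
  have t: "take k (s[i := a, j := b]) = (take k s)[i := a, j := b]" for a b
    by (simp add: take_update_swap)
  have d: "drop k (s[i := a, j := b]) = drop k s" for a b using assms by simp
  have n: "take k s ! i = s ! i" "take k s ! j = s ! j" using assms by simp_all
  show "apply_gate (i, j, U) (tensor k \<phi> \<psi>) s = tensor k (apply_gate (i, j, U) \<phi>) \<psi> s"
    unfolding apply_gate_triple tensor_def t d n by (simp add: sum_distrib_right mult.assoc)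
qed

lemma run_circuit_tensor_left:
  assumes "\<forall>g\<in>set C. fst g < k \<and> fst (snd g) < k"
  shows "run_circuit C (tensor k \<phi> \<psi>) = tensor k (run_circuit C \<phi>) \<psi>"
  using assms
proof (induction C arbitrary: \<phi>)
  case Nil
  then show ?case by simp
next
  case (Cons g C)
  obtain i j U where g: "g = (i, j, U)" by (cases g) auto
  have "apply_gate g (tensor k \<phi> \<psi>) = tensor k (apply_gate g \<phi>) \<psi>"
    using Cons.prems g by (simp add: apply_gate_tensor_left)
  thus ?case using Cons by simp
qed

definition shift_gate :: "nat \<Rightarrow> gate \<Rightarrow> gate" where
  "shift_gate k g = (case g of (i, j, U) \<Rightarrow> (k + i, k + j, U))"

lemma apply_shift_gate_tensor:
  assumes van: "\<forall>s. length s \<noteq> k \<longrightarrow> \<phi> s = 0"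
  shows "apply_gate (k + i, k + j, U) (tensor k \<phi> \<psi>) = tensor k \<phi> (apply_gate (i, j, U) \<psi>)"
proof (rule ext)
  fix s
  show "apply_gate (k + i, k + j, U) (tensor k \<phi> \<psi>) s = tensor k \<phi> (apply_gate (i, j, U) \<psi>) s"
  proof (cases "k \<le> length s")
    case True
    have t: "take k (s[k + i := a, k + j := b]) = take k s" for a b by simp
    have d: "drop k (s[k + i := a, k + j := b]) = (drop k s)[i := a, j := b]" for a b
      by (simp add: drop_update_swap)
    have n: "s ! (k + i) = drop k s ! i" "s ! (k + j) = drop k s ! j" using True by simp_all
    show ?thesis unfolding apply_gate_triple tensor_def t d n by (simp add: sum_distrib_left mult.left_commute)
  next
    case False
    hence "length (take k (s[k + i := a, k + j := b])) \<noteq> k" for a b by simp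
    hence z1: "\<phi> (take k (s[k + i := a, k + j := b])) = 0" for a b using van by blast
    have z2: "\<phi> (take k s) = 0" using van False by simp
    show ?thesis unfolding apply_gate_triple tensor_def z1 z2 by simp
  qed
qed

lemma run_circuit_shift_tensor:
  assumes van: "\<forall>s. length s \<noteq> k \<longrightarrow> \<phi> s = 0"
  shows "run_circuit (map (shift_gate k) C) (tensor k \<phi> \<psi>) = tensor k \<phi> (run_circuit C \<psi>)"
proof (induction C arbitrary: \<psi>)
  case Nil
  then show ?case by simp
next
  case (Cons g C)
  obtain i j U where g: "g = (i, j, U)" by (cases g) auto
  have "apply_gate (shift_gate k g) (tensor k \<phi> \<psi>) = tensor k \<phi> (apply_gate g \<psi>)"
    using apply_shift_gate_tensor[OF van] g by (simp add: shift_gate_def)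
  thus ?case using Cons by simp
qed

lemma take_drop_eq_append: "length u = m \<Longrightarrow> (take m s = u \<and> drop m s = v) \<longleftrightarrow> s = u @ v"
  by (metis append_eq_conv_conj)

lemma tensor_basis_basis:
  assumes "length u = m"
  shows "tensor m (basis u) (basis v) = basis (u @ v)"
proof
  fix s
  have "s = u @ v \<longleftrightarrow> take m s = u \<and> drop m s = v" using take_drop_eq_append[OF assms] by simp
  then show "tensor m (basis u) (basis v) s = basis (u @ v) s" unfolding tensor_def basis_def by simp
qed

lemma tensor_sum_left: "tensor m (\<lambda>s. \<Sum>\<kappa>\<in>K. c \<kappa> * \<phi> \<kappa> s) \<psi> = (\<lambda>s. \<Sum>\<kappa>\<in>K. c \<kappa> * tensor m (\<phi> \<kappa>) \<psi> s)"
  unfolding tensor_def by (simp add: sum_distrib_right mult.assoc)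

lemma tensor_sum_right: "tensor m \<phi> (\<lambda>s. \<Sum>\<kappa>\<in>K. c \<kappa> * \<psi> \<kappa> s) = (\<lambda>s. \<Sum>\<kappa>\<in>K. c \<kappa> * tensor m \<phi> (\<psi> \<kappa>) s)"
  unfolding tensor_def by (simp add: sum_distrib_left mult.left_commute)

lemma sqnorm_accept_swap:
  assumes "A < M" "0 < A"
  shows "sqnorm M (proj_prefix 1 [True] (apply_gate (0, A, swap_mat) \<Xi>)) =
         (\<Sum>s\<in>{s. length s = M}. if s ! A then (cmod (\<Xi> s))\<^sup>2 else 0)"
proof -
  define S where "S = {s :: bool list. length s = M}"
  define \<pi> where "\<pi> = (\<lambda>s :: bool list. s[0 := s ! A, A := s ! 0])"
  have inv: "\<pi> (\<pi> s) = s" if "s \<in> S" for s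
  proof -
    have l: "length s = M" using that unfolding S_def by simp
    show ?thesis unfolding \<pi>_def
      by (rule nth_equalityI) (use l assms in \<open>auto simp: nth_list_update\<close>)
  qed
  have inS: "\<pi> s \<in> S" if "s \<in> S" for s using that unfolding S_def \<pi>_def by simp
  have piA: "\<pi> s ! A = s ! 0" if "s \<in> S" for s using that assms unfolding S_def \<pi>_def by simp
  have "sqnorm M (proj_prefix 1 [True] (apply_gate (0, A, swap_mat) \<Xi>)) =
        (\<Sum>s\<in>S. if s ! 0 then (cmod (\<Xi> (\<pi> s)))\<^sup>2 else 0)"
    unfolding sqnorm_def S_def[symmetric]
  proof (rule sum.cong[OF refl])
    fix s assume s: "s \<in> S"
    hence "s \<noteq> []" using assms unfolding S_def by auto
    hence t1: "take 1 s = [s ! 0]" by (cases s) auto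
    show "(cmod (proj_prefix 1 [True] (apply_gate (0, A, swap_mat) \<Xi>) s))\<^sup>2 = (if s ! 0 then (cmod (\<Xi> (\<pi> s)))\<^sup>2 else 0)"
      unfolding proj_prefix_def apply_swap t1 \<pi>_def by simp
  qed
  also have "\<dots> = (\<Sum>s\<in>S. if s ! A then (cmod (\<Xi> s))\<^sup>2 else 0)"
  proof (rule sum.reindex_bij_witness[of S \<pi> \<pi>])
    show "\<And>a. a \<in> S \<Longrightarrow> \<pi> (\<pi> a) = a" by (rule inv)
    show "\<And>a. a \<in> S \<Longrightarrow> \<pi> a \<in> S" by (rule inS)
    show "\<And>b. b \<in> S \<Longrightarrow> \<pi> (\<pi> b) = b" by (rule inv)
    show "\<And>b. b \<in> S \<Longrightarrow> \<pi> b \<in> S" by (rule inS)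
    fix a assume a: "a \<in> S"
    show "(if \<pi> a ! A then (cmod (\<Xi> (\<pi> a)))\<^sup>2 else 0) = (if a ! 0 then (cmod (\<Xi> (\<pi> a)))\<^sup>2 else 0)"
      using piA[OF a] by simp
  qed
  finally show ?thesis unfolding S_def .
qed

lemma sum_flag_tensor_basis:
  assumes "length q = k"
  shows "(\<Sum>s\<in>{s. length s = k + R}. if s ! (k + A') then (cmod (tensor k (basis q) \<Phi> s))\<^sup>2 else 0)
       = (\<Sum>\<rho>\<in>{\<rho>. length \<rho> = R}. if \<rho> ! A' then (cmod (\<Phi> \<rho>))\<^sup>2 else 0)"
proof -
  define S where "S = {s :: bool list. length s = k + R}"
  define T where "T = {\<rho> :: bool list. length \<rho> = R}"
  define g where "g = (\<lambda>s. if s ! (k + A') then (cmod (tensor k (basis q) \<Phi> s))\<^sup>2 else 0)"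
  have finS: "finite S" unfolding S_def using finite_lists_length_eq[of "UNIV :: bool set"] by simp
  have sub: "(\<lambda>\<rho>. q @ \<rho>) ` T \<subseteq> S" unfolding S_def T_def using assms by auto
  have zero: "g s = 0" if "s \<in> S - (\<lambda>\<rho>. q @ \<rho>) ` T" for s
  proof -
    have "take k s \<noteq> q"
    proof
      assume "take k s = q"
      hence "s = q @ drop k s" by (metis append_take_drop_id)
      moreover have "drop k s \<in> T" using that unfolding S_def T_def by simp
      ultimately show False using that by blast
    qed
    thus ?thesis unfolding g_def tensor_def basis_def by simp
  qed
  have "sum g S = sum g ((\<lambda>\<rho>. q @ \<rho>) ` T)"
    using finS sub zero by (intro sum.mono_neutral_right) auto
  also have "\<dots> = (\<Sum>\<rho>\<in>T. g (q @ \<rho>))" by (subst sum.reindex) (simp_all add: inj_on_def)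
  also have "\<dots> = (\<Sum>\<rho>\<in>T. if \<rho> ! A' then (cmod (\<Phi> \<rho>))\<^sup>2 else 0)"
    unfolding g_def tensor_def basis_def using assms by (intro sum.cong refl) (simp add: nth_append)
  finally show ?thesis unfolding S_def T_def g_def .
qed

definition prod_state :: "nat \<Rightarrow> (nat \<Rightarrow> bool \<Rightarrow> complex) \<Rightarrow> qstate" where
  "prod_state k \<alpha> = (\<lambda>s. if length s = k then (\<Prod>m<k. \<alpha> m (s ! m)) else 0)"

lemma prod_indicator:
  "finite A \<Longrightarrow> (\<Prod>i\<in>A. if P i then 1 else 0) = (if \<forall>i\<in>A. P i then 1 else (0 :: 'a :: comm_semiring_1))"
  by (induction A rule: finite_induct) auto

lemma basis_eq_prod_state: "basis w = prod_state (length w) (\<lambda>m y. if y = w ! m then 1 else 0)"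
proof
  fix s
  have "s = w \<longleftrightarrow> length s = length w \<and> (\<forall>m<length w. s ! m = w ! m)"
    by (auto simp: list_eq_iff_nth_eq)
  then show "basis w s = prod_state (length w) (\<lambda>m y. if y = w ! m then 1 else 0) s"
    unfolding basis_def prod_state_def by (simp add: prod_indicator)
qed

lemma prod_nth_list_update:
  fixes \<alpha> :: "nat \<Rightarrow> bool \<Rightarrow> complex"
  assumes "m < k" "length s = k"
  shows "(\<Prod>m'<k. \<alpha> m' (s[m := b] ! m')) = \<alpha> m b * (\<Prod>m'\<in>{..<k} - {m}. \<alpha> m' (s ! m'))"
proof -
  have "(\<Prod>m'<k. \<alpha> m' (s[m := b] ! m')) = \<alpha> m (s[m := b] ! m) * (\<Prod>m'\<in>{..<k} - {m}. \<alpha> m' (s[m := b] ! m'))"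
    using assms(1) by (simp add: prod.remove)
  also have "(\<Prod>m'\<in>{..<k} - {m}. \<alpha> m' (s[m := b] ! m')) = (\<Prod>m'\<in>{..<k} - {m}. \<alpha> m' (s ! m'))"
    by (rule prod.cong) auto
  finally show ?thesis using assms by simp
qed

lemma apply_ctrl_prod_state:
  assumes "c < k" "m < k" "c \<noteq> m" and ac: "\<alpha> c = (\<lambda>y. if y = xc then 1 else 0)"
  shows "apply_gate (c, m, ctrl_mat cv V) (prod_state k \<alpha>) =
     prod_state k (\<alpha>(m := (if xc = cv then (\<lambda>y. \<Sum>b\<in>UNIV. V y b * \<alpha> m b) else \<alpha> m)))"
    (is "_ = prod_state k ?\<alpha>'")
proof (rule ext)
  fix s
  show "apply_gate (c, m, ctrl_mat cv V) (prod_state k \<alpha>) s = prod_state k ?\<alpha>' s"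
  proof (cases "length s = k")
    case False
    then show ?thesis unfolding apply_ctrl prod_state_def by simp
  next
    case True
    define R where "R = (\<Prod>m'\<in>{..<k} - {m}. \<alpha> m' (s ! m'))"
    have cR: "c \<in> {..<k} - {m}" using assms by simp
    have R0: "R = 0" if sc: "s ! c \<noteq> xc"
    proof -
      have "\<alpha> c (s ! c) = 0" using ac sc by simp
      hence "\<exists>a\<in>{..<k} - {m}. \<alpha> a (s ! a) = 0" using cR by blast
      thus ?thesis unfolding R_def by (intro prod_zero) simp_all
    qed
    have lhs: "apply_gate (c, m, ctrl_mat cv V) (prod_state k \<alpha>) s =
       (if s ! c = cv then (\<Sum>b\<in>UNIV. V (s ! m) b * \<alpha> m b) * R else \<alpha> m (s ! m) * R)"
    proof -
      have "prod_state k \<alpha> (s[m := b]) = \<alpha> m b * R" for b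
        unfolding prod_state_def R_def using True assms(2) prod_nth_list_update[OF assms(2) True] by simp
      moreover have "prod_state k \<alpha> s = \<alpha> m (s ! m) * R"
        using prod_nth_list_update[OF assms(2) True, of \<alpha> "s ! m"] True unfolding prod_state_def R_def by simp
      ultimately show ?thesis unfolding apply_ctrl by (simp add: sum_distrib_right mult.assoc)
    qed
    have rhs: "prod_state k ?\<alpha>' s = ?\<alpha>' m (s ! m) * R"
    proof -
      have "(\<Prod>m'\<in>{..<k} - {m}. ?\<alpha>' m' (s ! m')) = R" unfolding R_def by (rule prod.cong) auto
      thus ?thesis unfolding prod_state_def using True assms(2) by (simp add: prod.remove)
    qed
    show ?thesis unfolding lhs rhs using R0 by (cases "s ! c = xc") auto
  qed
qed

lemma run_ctrls_prod_state:
  fixes ms :: "nat list" and ctl :: "nat \<Rightarrow> nat" and cvf :: "nat \<Rightarrow> bool" and xv :: "nat \<Rightarrow> bool"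
  assumes "distinct ms"
    and "\<forall>m\<in>set ms. m < k \<and> ctl m < k \<and> ctl m \<notin> set ms"
    and "\<forall>m\<in>set ms. \<alpha> (ctl m) = (\<lambda>y. if y = xv (ctl m) then 1 else 0)"
  shows "run_circuit (map (\<lambda>m. (ctl m, m, ctrl_mat (cvf m) V)) ms) (prod_state k \<alpha>) =
    prod_state k (\<lambda>m'. if m' \<in> set ms \<and> xv (ctl m') = cvf m' then (\<lambda>y. \<Sum>b\<in>UNIV. V y b * \<alpha> m' b) else \<alpha> m')"
  using assms
proof (induction ms arbitrary: \<alpha>)
  case Nil
  then show ?case by simp
next
  case (Cons m ms)
  define \<alpha>1 where "\<alpha>1 = \<alpha>(m := (if xv (ctl m) = cvf m then (\<lambda>y. \<Sum>b\<in>UNIV. V y b * \<alpha> m b) else \<alpha> m))"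
  have cm: "ctl m < k" "m < k" "ctl m \<noteq> m" using Cons.prems(2) by auto
  have step: "apply_gate (ctl m, m, ctrl_mat (cvf m) V) (prod_state k \<alpha>) = prod_state k \<alpha>1"
    unfolding \<alpha>1_def by (rule apply_ctrl_prod_state[OF cm]) (use Cons.prems(3) in simp)
  have IHp: "\<forall>m'\<in>set ms. \<alpha>1 (ctl m') = (\<lambda>y. if y = xv (ctl m') then 1 else 0)"
  proof
    fix m' assume m': "m' \<in> set ms"
    hence "ctl m' \<noteq> m" using Cons.prems(2) by auto
    thus "\<alpha>1 (ctl m') = (\<lambda>y. if y = xv (ctl m') then 1 else 0)"
      unfolding \<alpha>1_def using Cons.prems(3) m' by simp
  qed
  have IH: "run_circuit (map (\<lambda>m. (ctl m, m, ctrl_mat (cvf m) V)) ms) (prod_state k \<alpha>1) =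
    prod_state k (\<lambda>m'. if m' \<in> set ms \<and> xv (ctl m') = cvf m' then (\<lambda>y. \<Sum>b\<in>UNIV. V y b * \<alpha>1 m' b) else \<alpha>1 m')"
    using Cons.prems(1,2) IHp by (intro Cons.IH) auto
  have "m \<notin> set ms" using Cons.prems(1) by simp
  have fe: "(\<lambda>m'. if m' \<in> set ms \<and> xv (ctl m') = cvf m' then (\<lambda>y. \<Sum>b\<in>UNIV. V y b * \<alpha>1 m' b) else \<alpha>1 m') =
     (\<lambda>m'. if m' \<in> set (m # ms) \<and> xv (ctl m') = cvf m' then (\<lambda>y. \<Sum>b\<in>UNIV. V y b * \<alpha> m' b) else \<alpha> m')"
  proof (rule ext)
    fix m'
    show "(if m' \<in> set ms \<and> xv (ctl m') = cvf m' then (\<lambda>y. \<Sum>b\<in>UNIV. V y b * \<alpha>1 m' b) else \<alpha>1 m') =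
     (if m' \<in> set (m # ms) \<and> xv (ctl m') = cvf m' then (\<lambda>y. \<Sum>b\<in>UNIV. V y b * \<alpha> m' b) else \<alpha> m')"
      using \<open>m \<notin> set ms\<close> unfolding \<alpha>1_def by (cases "m' = m") simp_all
  qed
  show ?case using step IH fe by simp
qed

lemma lists_length_Suc_snoc: "{s :: bool list. length s = Suc k} = (\<lambda>(s, y). s @ [y]) ` ({s. length s = k} \<times> (UNIV :: bool set))"
proof
  show "{s :: bool list. length s = Suc k} \<subseteq> (\<lambda>(s, y). s @ [y]) ` ({s. length s = k} \<times> (UNIV :: bool set))"
  proof
    fix s :: "bool list" assume "s \<in> {s. length s = Suc k}"
    hence l: "length s = Suc k" by simp
    hence "s = butlast s @ [last s]" by (metis append_butlast_last_id list.size(3) nat.distinct(1))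
    moreover have "length (butlast s) = k" using l by simp
    ultimately show "s \<in> (\<lambda>(s, y). s @ [y]) ` ({s. length s = k} \<times> (UNIV :: bool set))"
      by (intro image_eqI[of _ _ "(butlast s, last s)"]) auto
  qed
qed auto

lemma sum_lists_prod_eq_prod_sum:
  fixes g :: "nat \<Rightarrow> bool \<Rightarrow> 'a :: comm_semiring_1"
  shows "(\<Sum>s\<in>{s. length s = k}. \<Prod>m<k. g m (s ! m)) = (\<Prod>m<k. g m False + g m True)"
proof (induction k)
  case 0
  have "{s :: bool list. length s = 0} = {[]}" by auto
  then show ?case by simp
next
  case (Suc k)
  have inj: "inj_on (\<lambda>(s, y). s @ [y]) ({s :: bool list. length s = k} \<times> (UNIV :: bool set))"
    by (rule inj_onI) auto
  have fin: "finite {s :: bool list. length s = k}"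
    using finite_lists_length_eq[of "UNIV :: bool set" k] by simp
  have "(\<Sum>s\<in>{s. length s = Suc k}. \<Prod>m<Suc k. g m (s ! m)) =
     (\<Sum>(s, y)\<in>{s. length s = k} \<times> (UNIV :: bool set). \<Prod>m<Suc k. g m ((s @ [y]) ! m))"
    unfolding lists_length_Suc_snoc by (subst sum.reindex[OF inj]) (simp add: case_prod_beta)
  also have "\<dots> = (\<Sum>(s, y)\<in>{s. length s = k} \<times> (UNIV :: bool set). (\<Prod>m<k. g m (s ! m)) * g k y)"
  proof (rule sum.cong[OF refl])
    fix sy assume "sy \<in> {s :: bool list. length s = k} \<times> (UNIV :: bool set)"
    then obtain s y where sy: "sy = (s, y)" "length s = k" by auto
    have "(\<Prod>m<k. g m ((s @ [y]) ! m)) = (\<Prod>m<k. g m (s ! m))"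
      by (rule prod.cong) (auto simp: nth_append sy(2))
    thus "(case sy of (s, y) \<Rightarrow> \<Prod>m<Suc k. g m ((s @ [y]) ! m)) = (case sy of (s, y) \<Rightarrow> (\<Prod>m<k. g m (s ! m)) * g k y)"
      using sy by (simp add: nth_append)
  qed
  also have "\<dots> = (\<Sum>s\<in>{s. length s = k}. \<Prod>m<k. g m (s ! m)) * (\<Sum>y\<in>UNIV. g k y)"
    by (simp add: sum.cartesian_product[symmetric] sum_product)
  also have "\<dots> = (\<Prod>m<Suc k. g m False + g m True)" using Suc by (simp add: sum_bool)
  finally show ?case .
qed

lemma sum_norm_sq_basis_comb:
  fixes f :: "'k \<Rightarrow> bool list" and M :: "'k \<Rightarrow> complex"
  assumes "finite K" "inj_on f K" "f ` K \<subseteq> S" "finite S"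
  shows "(\<Sum>\<sigma>\<in>S. (cmod (\<Sum>\<kappa>\<in>K. M \<kappa> * (if \<sigma> = f \<kappa> then 1 else 0)))\<^sup>2) = (\<Sum>\<kappa>\<in>K. (cmod (M \<kappa>))\<^sup>2)"
proof -
  have at: "(\<Sum>\<kappa>\<in>K. M \<kappa> * (if f \<kappa>0 = f \<kappa> then 1 else 0)) = M \<kappa>0" if "\<kappa>0 \<in> K" for \<kappa>0
  proof -
    have "(\<Sum>\<kappa>\<in>K. M \<kappa> * (if f \<kappa>0 = f \<kappa> then 1 else 0)) = (\<Sum>\<kappa>\<in>K. if \<kappa> = \<kappa>0 then M \<kappa> else 0)"
    proof (rule sum.cong[OF refl])
      fix \<kappa> assume "\<kappa> \<in> K"
      hence "f \<kappa>0 = f \<kappa> \<longleftrightarrow> \<kappa> = \<kappa>0" using assms(2) that inj_on_eq_iff by metis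
      thus "M \<kappa> * (if f \<kappa>0 = f \<kappa> then 1 else 0) = (if \<kappa> = \<kappa>0 then M \<kappa> else 0)" by simp
    qed
    also have "\<dots> = M \<kappa>0" using assms(1) that by simp
    finally show ?thesis .
  qed
  have out: "(\<Sum>\<kappa>\<in>K. M \<kappa> * (if \<sigma> = f \<kappa> then 1 else 0)) = 0" if "\<sigma> \<notin> f ` K" for \<sigma>
    using that by (intro sum.neutral) auto
  have "(\<Sum>\<sigma>\<in>S. (cmod (\<Sum>\<kappa>\<in>K. M \<kappa> * (if \<sigma> = f \<kappa> then 1 else 0)))\<^sup>2) =
        (\<Sum>\<sigma>\<in>f ` K. (cmod (\<Sum>\<kappa>\<in>K. M \<kappa> * (if \<sigma> = f \<kappa> then 1 else 0)))\<^sup>2)"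
    using assms(3,4) out by (intro sum.mono_neutral_right) auto
  also have "\<dots> = (\<Sum>\<kappa>0\<in>K. (cmod (\<Sum>\<kappa>\<in>K. M \<kappa> * (if f \<kappa>0 = f \<kappa> then 1 else 0)))\<^sup>2)"
    using assms(2) by (simp add: sum.reindex)
  also have "\<dots> = (\<Sum>\<kappa>\<in>K. (cmod (M \<kappa>))\<^sup>2)" using at by (intro sum.cong) auto
  finally show ?thesis .
qed

section \<open>Grid states\<close>

definition one_hot :: "nat \<Rightarrow> nat \<Rightarrow> bool list" where "one_hot m L = map (\<lambda>i. i = m) [0..<L]"

lemma length_one_hot[simp]: "length (one_hot m L) = L" by (simp add: one_hot_def)
lemma nth_one_hot[simp]: "i < L \<Longrightarrow> one_hot m L ! i = (i = m)" by (simp add: one_hot_def)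

lemma block_index_less:
  fixes i n c p :: nat
  shows "i < n \<Longrightarrow> c < p \<Longrightarrow> i * p + c < n * p"
proof -
  assume "i < n" "c < p"
  hence "i * p + c < i * p + p" by simp
  also have "\<dots> = (i + 1) * p" by simp
  also have "\<dots> \<le> n * p" using \<open>i < n\<close> by (intro mult_le_mono1) simp
  finally show ?thesis .
qed

lemma grid_index_less:
  fixes j t p :: nat
  shows "j < p \<Longrightarrow> t < p \<Longrightarrow> j * p + t < p * p"
  by (rule block_index_less)

lemma grid_index_eq_iff: fixes j p t j' t' :: nat shows "t < p \<Longrightarrow> t' < p \<Longrightarrow> (j * p + t = j' * p + t') \<longleftrightarrow> (j = j' \<and> t = t')"
proof
  assume tp: "t < p" "t' < p" and eq: "j * p + t = j' * p + t'"
  have "(j * p + t) div p = j" "(j * p + t) mod p = t" using tp by simp_all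
  moreover have "(j' * p + t') div p = j'" "(j' * p + t') mod p = t'" using tp by simp_all
  ultimately show "j = j' \<and> t = t'" using eq by metis
qed simp

text \<open>The register used by the second circuit of the verifier holds a pair \<open>(j, t)\<close> in one-hot
  encoding on \<open>p * p\<close> qubits (qubit \<open>j * p + t\<close>), followed by a flag qubit and the prover's
  answer \<open>r\<close>.\<close>
definition grid_string :: "nat \<Rightarrow> nat \<Rightarrow> nat \<Rightarrow> bool \<Rightarrow> bool list \<Rightarrow> bool list" where
  "grid_string p j t e r = one_hot (j * p + t) (p * p) @ [e] @ r"

lemma length_grid_string[simp]: "length (grid_string p j t e r) = p * p + 1 + length r"
  by (simp add: grid_string_def)

lemma grid_string_nth_grid: "j' < p \<Longrightarrow> t' < p \<Longrightarrow> t < p \<Longrightarrow> grid_string p j t e r ! (j' * p + t') = (j = j' \<and> t = t')"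
proof -
  assume a: "j' < p" "t' < p" "t < p"
  have lt: "j' * p + t' < p * p" using grid_index_less a by simp
  have "(j' * p + t' = j * p + t) = (j' = j \<and> t' = t)" using grid_index_eq_iff[of t' p t j' j] a by simp
  thus ?thesis unfolding grid_string_def using lt by (auto simp: nth_append)
qed

lemma grid_string_nth_flag[simp]: "grid_string p j t e r ! (p * p) = e"
  unfolding grid_string_def by (simp add: nth_append)

lemma grid_string_nth_answer: "grid_string p j t e r ! (p * p + 1 + i) = r ! i"
  unfolding grid_string_def by (simp add: nth_append)

lemma grid_string_inj:
  assumes "j < p" "t < p" "j' < p" "t' < p" "grid_string p j t e r = grid_string p j' t' e' r'"
  shows "j = j' \<and> t = t' \<and> e = e' \<and> r = r'"
proof -
  have "grid_string p j t e r ! (j * p + t) = True" using grid_string_nth_grid[of j p t t j e r] assms by simp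
  hence "grid_string p j' t' e' r' ! (j * p + t)" using assms(5) by simp
  hence jt: "j' = j \<and> t' = t" using grid_string_nth_grid[of j p t t' j' e' r'] assms by simp
  have "e = e'" using arg_cong[OF assms(5), of "\<lambda>l. l ! (p * p)"] by simp
  moreover have "r = r'" using arg_cong[OF assms(5), of "drop (p * p + 1)"] unfolding grid_string_def by simp
  ultimately show ?thesis using jt by simp
qed

lemma grid_string_update_flag: "(grid_string p j t e r)[p * p := e'] = grid_string p j t e' r"
  unfolding grid_string_def by (simp add: list_update_append)

lemma one_hot_update:
  assumes "m < L" "m' < L" "m \<noteq> m'"
  shows "(one_hot m L)[m := False, m' := True] = one_hot m' L"
  by (rule nth_equalityI) (use assms in \<open>auto simp: nth_list_update\<close>)

lemma grid_string_update_grid: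
  assumes "j < p" "t < p" "j' < p" "t' < p" "(j, t) \<noteq> (j', t')"
  shows "(grid_string p j t e r)[j * p + t := False, j' * p + t' := True] = grid_string p j' t' e r"
proof -
  have lt: "j * p + t < p * p" "j' * p + t' < p * p" using assms grid_index_less by auto
  have ne: "j * p + t \<noteq> j' * p + t'" using assms grid_index_eq_iff[of t p t' j j'] by auto
  show ?thesis unfolding grid_string_def using lt ne one_hot_update[OF lt ne] by (simp add: list_update_append)
qed

lemma list_update_undo:
  assumes "m \<noteq> m'" "\<sigma>[m := a, m' := b] = \<tau>"
  shows "\<sigma> = \<tau>[m := \<sigma> ! m, m' := \<sigma> ! m']"
proof -
  have "\<sigma>[m := a, m' := b, m := \<sigma> ! m] = \<sigma>[m := a, m := \<sigma> ! m, m' := b]"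
    using list_update_swap[of m' m "\<sigma>[m := a]" b "\<sigma> ! m"] assms(1) by simp
  also have "\<dots> = \<sigma>[m' := b]" by (simp only: list_update_overwrite list_update_id)
  finally have "\<sigma>[m := a, m' := b, m := \<sigma> ! m, m' := \<sigma> ! m'] = \<sigma>[m' := b, m' := \<sigma> ! m']" by simp
  also have "\<dots> = \<sigma>" by (simp only: list_update_overwrite list_update_id)
  finally show ?thesis unfolding assms(2) by simp
qed

definition grid_state :: "nat \<Rightarrow> (nat \<Rightarrow> nat \<Rightarrow> complex) \<Rightarrow> (nat \<Rightarrow> nat \<Rightarrow> bool) \<Rightarrow> bool list \<Rightarrow> qstate" where
  "grid_state p M e r = (\<lambda>\<sigma>. \<Sum>t\<in>{1..<p}. \<Sum>j<p. M t j * (if \<sigma> = grid_string p j t (e t j) r then 1 else 0))"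

definition on_grid :: "nat \<Rightarrow> (nat \<Rightarrow> nat \<Rightarrow> bool) \<Rightarrow> bool list \<Rightarrow> bool list \<Rightarrow> bool" where
  "on_grid p e r \<sigma> \<longleftrightarrow> (\<exists>t\<in>{1..<p}. \<exists>j<p. \<sigma> = grid_string p j t (e t j) r)"

lemma grid_state_at:
  assumes "t \<in> {1..<p}" "j < p"
  shows "grid_state p M e r (grid_string p j t (e t j) r) = M t j"
proof -
  have "(\<Sum>t'\<in>{1..<p}. \<Sum>j'<p. M t' j' * (if grid_string p j t (e t j) r = grid_string p j' t' (e t' j') r then 1 else 0))
      = (\<Sum>t'\<in>{1..<p}. \<Sum>j'<p. if t' = t \<and> j' = j then M t' j' else 0)"
  proof (intro sum.cong refl)
    fix t' j' assume "t' \<in> {1..<p}" "j' \<in> {..<p}"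
    hence "grid_string p j t (e t j) r = grid_string p j' t' (e t' j') r \<longleftrightarrow> t' = t \<and> j' = j"
      using grid_string_inj[of j p t j' t' "e t j" r "e t' j'" r] assms by auto
    thus "M t' j' * (if grid_string p j t (e t j) r = grid_string p j' t' (e t' j') r then 1 else 0) =
          (if t' = t \<and> j' = j then M t' j' else 0)" by simp
  qed
  also have "\<dots> = (\<Sum>t'\<in>{1..<p}. if t' = t then M t j else 0)"
    by (intro sum.cong refl) (use assms in simp)
  also have "\<dots> = M t j" using assms by simp
  finally show ?thesis unfolding grid_state_def .
qed

lemma grid_state_off:
  assumes "\<not> on_grid p e r \<sigma>"
  shows "grid_state p M e r \<sigma> = 0"
  unfolding grid_state_def using assms unfolding on_grid_def by (intro sum.neutral) auto

lemma grid_state_bit_set: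
  assumes "t \<in> {1..<p}" "j < p" "\<sigma> ! (j * p + t)"
  shows "grid_state p M e r \<sigma> = (if \<sigma> = grid_string p j t (e t j) r then M t j else 0)"
proof (cases "\<sigma> = grid_string p j t (e t j) r")
  case False
  have "\<not> on_grid p e r \<sigma>"
  proof
    assume "on_grid p e r \<sigma>"
    then obtain t' j' where "t' \<in> {1..<p}" "j' < p" and \<sigma>: "\<sigma> = grid_string p j' t' (e t' j') r"
      unfolding on_grid_def by blast
    then have "j' = j \<and> t' = t" using assms grid_string_nth_grid[of j p t t' j'] by auto
    then show False using False \<sigma> by simp
  qed
  then show ?thesis using False by (simp add: grid_state_off)
qed (use assms grid_state_at in simp)

lemma apply_diag_grid_state:
  "apply_gate (i1, i2, diag_mat D) (grid_state p M e r) =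
   grid_state p (\<lambda>t j. D (grid_string p j t (e t j) r ! i1) (grid_string p j t (e t j) r ! i2) * M t j) e r"
  unfolding apply_diag grid_state_def sum_distrib_left by (intro ext sum.cong refl) auto

lemma grid_string_update_iff:
  assumes "j < p" "t < p" "j' < p" "t' < p" "(j, t) \<noteq> (j', t')"
    and "\<sigma> ! (j * p + t)" "\<not> \<sigma> ! (j' * p + t')"
  shows "\<sigma>[j * p + t := False, j' * p + t' := True] = grid_string p j' t' e r \<longleftrightarrow>
    \<sigma> = grid_string p j t e r"
proof
  assume upd: "\<sigma>[j * p + t := False, j' * p + t' := True] = grid_string p j' t' e r"
  have ne: "j * p + t \<noteq> j' * p + t'" using assms grid_index_eq_iff[of t p t' j j'] by auto
  have "\<sigma> = (grid_string p j' t' e r)[j * p + t := True, j' * p + t' := False]"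
    using list_update_undo[OF ne upd] assms(6,7) by simp
  also have "\<dots> = (grid_string p j' t' e r)[j' * p + t' := False, j * p + t := True]"
    using ne by (simp add: list_update_swap)
  also have "\<dots> = grid_string p j t e r"
    using assms(1-5) by (intro grid_string_update_grid) auto
  finally show "\<sigma> = grid_string p j t e r" .
qed (use assms grid_string_update_grid in simp)

definition givens_update :: "real \<Rightarrow> real \<Rightarrow> nat \<Rightarrow> nat \<Rightarrow> (nat \<Rightarrow> nat \<Rightarrow> complex) \<Rightarrow> nat \<Rightarrow> nat \<Rightarrow> complex" where
  "givens_update gc gs t0 k M = (\<lambda>t j.
     if t = t0 \<and> j = 0 then of_real gc * M t0 0 + of_real gs * M t0 k
     else if t = t0 \<and> j = k then - of_real gs * M t0 0 + of_real gc * M t0 k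
     else M t j)"

lemma grid_state_wrong_length:
  "length \<sigma> \<noteq> p * p + 1 + length r \<Longrightarrow> grid_state p M e r \<sigma> = 0"
  unfolding grid_state_def by (intro sum.neutral ballI) auto

lemma grid_state_move:
  assumes "t0 \<in> {1..<p}" "j < p" "j' < p" "j \<noteq> j'" "e t0 j = e t0 j'"
    and "\<sigma> ! (j * p + t0)" "\<not> \<sigma> ! (j' * p + t0)" "length \<sigma> = p * p + 1 + length r"
  shows "grid_state p M e r (\<sigma>[j * p + t0 := False, j' * p + t0 := True]) =
    (if \<sigma> = grid_string p j t0 (e t0 j) r then M t0 j' else 0)"
proof -
  have "j' * p + t0 < length \<sigma>" using grid_index_less[of j' p t0] assms by simp
  then have "\<sigma>[j * p + t0 := False, j' * p + t0 := True] ! (j' * p + t0)" by simp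
  then show ?thesis
    using grid_state_bit_set[OF assms(1,3)] grid_string_update_iff[of j p t0 j' t0 \<sigma>] assms by simp
qed

lemma grid_state_givens_update_same:
  assumes t0: "t0 \<in> {1..<p}" and k: "0 < k" "k < p" and same: "\<sigma> ! (0 * p + t0) = \<sigma> ! (k * p + t0)"
  shows "grid_state p (givens_update gc gs t0 k M) e r \<sigma> = grid_state p M e r \<sigma>"
  unfolding grid_state_def
proof (intro sum.cong refl)
  fix t j assume tj: "t \<in> {1..<p}" "j \<in> {..<p}"
  show "givens_update gc gs t0 k M t j * (if \<sigma> = grid_string p j t (e t j) r then 1 else 0) =
      M t j * (if \<sigma> = grid_string p j t (e t j) r then 1 else 0)"
  proof (cases "\<sigma> = grid_string p j t (e t j) r")
    case True
    then have "\<sigma> ! (0 * p + t0) = (j = 0 \<and> t = t0)" "\<sigma> ! (k * p + t0) = (j = k \<and> t = t0)"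
      using tj t0 k grid_string_nth_grid[of 0 p t0 t j] grid_string_nth_grid[of k p t0 t j] by auto
    then show ?thesis using same k unfolding givens_update_def by auto
  qed simp
qed

text \<open>A Givens rotation on the grid qubits \<open>(0, t0)\<close> and \<open>(k, t0)\<close> rotates the amplitudes of
  these two grid points; every other grid string has both qubits off and is left alone.\<close>
lemma apply_givens_grid_state:
  assumes t0: "t0 \<in> {1..<p}" and k: "0 < k" "k < p" and ee: "e t0 0 = e t0 k"
  shows "apply_gate (t0, k * p + t0, givens_mat gc gs) (grid_state p M e r) =
    grid_state p (givens_update gc gs t0 k M) e r"
proof (rule ext)
  fix \<sigma> :: "bool list"
  define m m' where "m = 0 * p + t0" and "m' = k * p + t0"
  let ?F = "grid_state p M e r" and ?M' = "givens_update gc gs t0 k M"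
  have mm': "m \<noteq> m'" unfolding m_def m'_def using k by simp
  have gate: "apply_gate (t0, k * p + t0, givens_mat gc gs) ?F \<sigma> =
    (if \<sigma> ! m = \<sigma> ! m' then ?F \<sigma>
     else if \<sigma> ! m then of_real gc * ?F \<sigma> + of_real gs * ?F (\<sigma>[m := False, m' := True])
     else - of_real gs * ?F (\<sigma>[m := True, m' := False]) + of_real gc * ?F \<sigma>)"
    using apply_givens[of t0 "k * p + t0"] mm' unfolding m_def m'_def by simp
  have at: "grid_state p N e r \<sigma> = (if \<sigma> = grid_string p j t0 (e t0 j) r then N t0 j else 0)"
    if "\<sigma> ! (j * p + t0)" "j < p" for N j
    using grid_state_bit_set[OF t0 that(2,1)] .
  consider (len) "length \<sigma> \<noteq> p * p + 1 + length r" | (same) "\<sigma> ! m = \<sigma> ! m'"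
    | (first) "\<sigma> ! m" "\<not> \<sigma> ! m'" "length \<sigma> = p * p + 1 + length r"
    | (second) "\<not> \<sigma> ! m" "\<sigma> ! m'" "length \<sigma> = p * p + 1 + length r"
    by blast
  then show "apply_gate (t0, k * p + t0, givens_mat gc gs) ?F \<sigma> = grid_state p ?M' e r \<sigma>"
  proof cases
    case len
    then show ?thesis unfolding gate by (simp add: grid_state_wrong_length)
  next
    case same
    then show ?thesis unfolding gate m_def m'_def using grid_state_givens_update_same[OF t0 k] by simp
  next
    case first
    then show ?thesis
      unfolding gate using at[of 0] grid_state_move[OF t0 _ k(2), of 0] k ee
      unfolding m_def m'_def by (simp add: givens_update_def)
  next
    case second
    then show ?thesis
      unfolding gate list_update_swap[OF mm'] using at[of k] grid_state_move[OF t0 k(2), of 0] k ee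
      unfolding m_def m'_def by (simp add: givens_update_def)
  qed
qed

lemma cnot_update_grid_string_iff:
  assumes "t0 \<in> {1..<p}" "j < p" "t < p"
  shows "\<sigma>[p * p := (\<sigma> ! (p * p) \<noteq> \<sigma> ! t0)] = grid_string p j t ee r \<longleftrightarrow>
    \<sigma> = grid_string p j t (ee \<noteq> (t = t0 \<and> j = 0)) r"
proof -
  have bit: "grid_string p j t f r ! t0 = (j = 0 \<and> t = t0)" for f
    using grid_string_nth_grid[of 0 p t0 t j f r] assms by auto
  have ne: "t0 \<noteq> p * p" using grid_index_less[of 0 p t0] assms by simp
  show ?thesis
  proof
    assume upd: "\<sigma>[p * p := (\<sigma> ! (p * p) \<noteq> \<sigma> ! t0)] = grid_string p j t ee r"
    have "length \<sigma> = p * p + 1 + length r" using arg_cong[OF upd, of length] by simp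
    then have "ee = (\<sigma> ! (p * p) \<noteq> \<sigma> ! t0)" and "\<sigma> ! t0 = (j = 0 \<and> t = t0)"
      using arg_cong[OF upd, of "\<lambda>l. l ! (p * p)"] arg_cong[OF upd, of "\<lambda>l. l ! t0"] ne bit by auto
    then have flag: "(ee \<noteq> (t = t0 \<and> j = 0)) = \<sigma> ! (p * p)" by auto
    have "\<sigma> = (grid_string p j t ee r)[p * p := \<sigma> ! (p * p)]"
      unfolding upd[symmetric] by simp
    then show "\<sigma> = grid_string p j t (ee \<noteq> (t = t0 \<and> j = 0)) r"
      unfolding flag by (simp add: grid_string_update_flag)
  next
    assume \<sigma>: "\<sigma> = grid_string p j t (ee \<noteq> (t = t0 \<and> j = 0)) r"
    then have "\<sigma> ! t0 = (t = t0 \<and> j = 0)" "\<sigma> ! (p * p) = (ee \<noteq> (t = t0 \<and> j = 0))"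
      using bit by auto
    then have "\<sigma>[p * p := (\<sigma> ! (p * p) \<noteq> \<sigma> ! t0)] = \<sigma>[p * p := ee]" by auto
    also have "\<dots> = grid_string p j t ee r" unfolding \<sigma> grid_string_update_flag ..
    finally show "\<sigma>[p * p := (\<sigma> ! (p * p) \<noteq> \<sigma> ! t0)] = grid_string p j t ee r" .
  qed
qed

lemma apply_cnot_grid_state:
  assumes "t0 \<in> {1..<p}"
  shows "apply_gate (t0, p * p, cnot_mat) (grid_state p M e r) =
    grid_state p M (\<lambda>t j. e t j \<noteq> (t = t0 \<and> j = 0)) r"
  unfolding apply_cnot grid_state_def
  using cnot_update_grid_string_iff[OF assms] by (intro ext sum.cong refl) auto

lemma run_diags_grid_state:
  "run_circuit (map (\<lambda>z. (f1 z, f2 z, diag_mat (Dz z))) zs) (grid_state p M e r) =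
   grid_state p (\<lambda>t j. prod_list (map (\<lambda>z. Dz z (grid_string p j t (e t j) r ! f1 z) (grid_string p j t (e t j) r ! f2 z)) zs) * M t j) e r"
proof (induction zs arbitrary: M)
  case Nil
  then show ?case by simp
next
  case (Cons z zs)
  show ?case by (simp add: apply_diag_grid_state Cons mult_ac)
qed

lemma prod_list_map_concat: "prod_list (map F (concat (map G xs))) = prod_list (map (\<lambda>x. prod_list (map F (G x))) xs)"
  by (induction xs) simp_all

lemma prod_list_map_upt: "prod_list (map f [0..<n]) = (\<Prod>i<n. f i)"
  by (induction n) (simp_all add: mult.commute)

definition givens_cos :: "nat \<Rightarrow> real" where "givens_cos k = sqrt (real k / real (k + 1))"
definition givens_sin :: "nat \<Rightarrow> real" where "givens_sin k = 1 / sqrt (real (k + 1))"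

lemma givens_cos_sin_sq: "(givens_cos k) ^ 2 + (givens_sin k) ^ 2 = 1"
proof -
  have "(givens_cos k) ^ 2 = real k / real (k + 1)" unfolding givens_cos_def by simp
  moreover have "(givens_sin k) ^ 2 = 1 / real (k + 1)" unfolding givens_sin_def by (simp add: power_divide)
  ultimately show ?thesis by (simp add: add_divide_distrib[symmetric])
qed

definition row_gates :: "nat \<Rightarrow> nat \<Rightarrow> gate list" where
  "row_gates p t = map (\<lambda>k. (t, k * p + t, givens_mat (givens_cos k) (givens_sin k))) [1..<p]"

definition row_update :: "nat \<Rightarrow> nat \<Rightarrow> (nat \<Rightarrow> nat \<Rightarrow> complex) \<Rightarrow> (nat \<Rightarrow> nat \<Rightarrow> complex)" where
  "row_update p t M = fold (\<lambda>k M. givens_update (givens_cos k) (givens_sin k) t k M) [1..<p] M"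

lemma run_givens_grid_state:
  assumes "t \<in> {1..<p}" "\<forall>k\<in>set ks. 0 < k \<and> k < p" "\<forall>j. e t j = e t 0"
  shows "run_circuit (map (\<lambda>k. (t, k * p + t, givens_mat (givens_cos k) (givens_sin k))) ks) (grid_state p M e r) =
         grid_state p (fold (\<lambda>k M. givens_update (givens_cos k) (givens_sin k) t k M) ks M) e r"
  using assms(2)
proof (induction ks arbitrary: M)
  case Nil
  then show ?case by simp
next
  case (Cons k ks)
  have "apply_gate (t, k * p + t, givens_mat (givens_cos k) (givens_sin k)) (grid_state p M e r) = grid_state p (givens_update (givens_cos k) (givens_sin k) t k M) e r"
    using Cons.prems assms(1,3) by (intro apply_givens_grid_state) auto
  thus ?case using Cons by simp
qed

lemma run_row_gates:
  assumes "t \<in> {1..<p}" "\<forall>j. e t j = e t 0"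
  shows "run_circuit (row_gates p t) (grid_state p M e r) = grid_state p (row_update p t M) e r"
  unfolding row_gates_def row_update_def by (rule run_givens_grid_state) (use assms in auto)

lemma run_all_row_gates:
  assumes "\<forall>t\<in>set ts. t \<in> {1..<p}" "\<forall>t j. e t j = e t 0"
  shows "run_circuit (concat (map (row_gates p) ts)) (grid_state p M e r) = grid_state p (fold (row_update p) ts M) e r"
  using assms(1)
proof (induction ts arbitrary: M)
  case Nil
  then show ?case by simp
next
  case (Cons t ts)
  have "run_circuit (row_gates p t) (grid_state p M e r) = grid_state p (row_update p t M) e r"
    using Cons.prems assms(2) by (intro run_row_gates) auto
  thus ?case using Cons by (simp add: run_circuit_append)
qed

lemma givens_update_other: "t' \<noteq> t \<Longrightarrow> givens_update gc gs t k M t' = M t'"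
  unfolding givens_update_def by (rule ext) simp

lemma fold_givens_update_other: "t' \<noteq> t \<Longrightarrow> fold (\<lambda>k M. givens_update (givens_cos k) (givens_sin k) t k M) ks M t' = M t'"
  by (induction ks arbitrary: M) (simp_all add: givens_update_other)

lemma row_update_other: "t' \<noteq> t \<Longrightarrow> row_update p t M t' = M t'"
  unfolding row_update_def by (rule fold_givens_update_other)

lemma fold_givens_update_row:
  "fold (\<lambda>k M. givens_update (givens_cos k) (givens_sin k) t k M) [1..<K + 1] M t 0 = of_real (1 / sqrt (real (K + 1))) * (\<Sum>j\<le>K. M t j)
   \<and> (\<forall>j>K. fold (\<lambda>k M. givens_update (givens_cos k) (givens_sin k) t k M) [1..<K + 1] M t j = M t j)"
proof (induction K)
  case 0
  then show ?case by simp
next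
  case (Suc K)
  define F where "F = fold (\<lambda>k M. givens_update (givens_cos k) (givens_sin k) t k M) [1..<K + 1] M"
  have split: "[1..<Suc K + 1] = [1..<K + 1] @ [K + 1]" by simp
  have eq: "fold (\<lambda>k M. givens_update (givens_cos k) (givens_sin k) t k M) [1..<Suc K + 1] M = givens_update (givens_cos (K + 1)) (givens_sin (K + 1)) t (K + 1) F"
    unfolding split F_def by simp
  have F0: "F t 0 = of_real (1 / sqrt (real (K + 1))) * (\<Sum>j\<le>K. M t j)" using Suc unfolding F_def by simp
  have FK: "F t (K + 1) = M t (K + 1)" using Suc unfolding F_def by simp
  have Fj: "F t j = M t j" if "j > K + 1" for j using Suc that unfolding F_def by simp
  have coef: "givens_cos (K + 1) * (1 / sqrt (real (K + 1))) = 1 / sqrt (real (Suc K + 1))"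
    unfolding givens_cos_def by (simp add: real_sqrt_divide field_simps)
  have "givens_update (givens_cos (K + 1)) (givens_sin (K + 1)) t (K + 1) F t 0 =
        of_real (givens_cos (K + 1)) * F t 0 + of_real (givens_sin (K + 1)) * F t (K + 1)"
    unfolding givens_update_def by simp
  also have "\<dots> = of_real (givens_cos (K + 1) * (1 / sqrt (real (K + 1)))) * (\<Sum>j\<le>K. M t j) + of_real (givens_sin (K + 1)) * M t (K + 1)"
    unfolding F0 FK by (simp add: mult.assoc)
  also have "\<dots> = of_real (1 / sqrt (real (Suc K + 1))) * (\<Sum>j\<le>Suc K. M t j)"
    unfolding coef givens_sin_def by (simp add: distrib_left add.commute)
  finally have A: "givens_update (givens_cos (K + 1)) (givens_sin (K + 1)) t (K + 1) F t 0 = of_real (1 / sqrt (real (Suc K + 1))) * (\<Sum>j\<le>Suc K. M t j)" .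
  have B: "\<forall>j>Suc K. givens_update (givens_cos (K + 1)) (givens_sin (K + 1)) t (K + 1) F t j = M t j"
    unfolding givens_update_def using Fj by auto
  show ?case unfolding eq using A B by simp
qed

lemma row_update_0:
  assumes "p \<ge> 1"
  shows "row_update p t M t 0 = of_real (1 / sqrt (real p)) * (\<Sum>j<p. M t j)"
proof -
  have e: "[1..<p] = [1..<(p - 1) + 1]" using assms by simp
  have s: "{..p - 1} = {..<p}" using assms by auto
  show ?thesis unfolding row_update_def e using fold_givens_update_row[of t "p - 1" M] assms s by simp
qed

lemma fold_row_update_other: "t \<notin> set ts \<Longrightarrow> fold (row_update p) ts M t = M t"
  by (induction ts arbitrary: M) (simp_all add: row_update_other)

lemma fold_row_update_0:
  assumes "distinct ts" "t \<in> set ts" "p \<ge> 1"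
  shows "fold (row_update p) ts M t 0 = of_real (1 / sqrt (real p)) * (\<Sum>j<p. M t j)"
  using assms(1,2)
proof (induction ts arbitrary: M)
  case Nil
  then show ?case by simp
next
  case (Cons t1 ts)
  show ?case
  proof (cases "t = t1")
    case True
    hence "t \<notin> set ts" using Cons.prems by simp
    hence "fold (row_update p) ts (row_update p t1 M) t = row_update p t1 M t" by (rule fold_row_update_other)
    thus ?thesis using True row_update_0[OF assms(3)] by simp
  next
    case False
    hence "t \<in> set ts" using Cons.prems by simp
    hence "fold (row_update p) ts (row_update p t1 M) t 0 = of_real (1 / sqrt (real p)) * (\<Sum>j<p. row_update p t1 M t j)"
      using Cons by simp
    thus ?thesis using False row_update_other[of t t1 p M] by simp
  qed
qed

lemma run_cnots_grid_state:
  assumes "distinct ts" "\<forall>t\<in>set ts. t \<in> {1..<p}"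
  shows "run_circuit (map (\<lambda>t. (t, p * p, cnot_mat)) ts) (grid_state p M e r) =
         grid_state p M (\<lambda>t j. e t j \<noteq> (t \<in> set ts \<and> j = 0)) r"
  using assms
proof (induction ts arbitrary: e)
  case Nil
  then show ?case by simp
next
  case (Cons t1 ts)
  have "apply_gate (t1, p * p, cnot_mat) (grid_state p M e r) = grid_state p M (\<lambda>t j. e t j \<noteq> (t = t1 \<and> j = 0)) r"
    using Cons.prems by (intro apply_cnot_grid_state) simp
  moreover have "(\<lambda>t j. (e t j \<noteq> (t = t1 \<and> j = 0)) \<noteq> (t \<in> set ts \<and> j = 0)) = (\<lambda>t j. e t j \<noteq> (t \<in> set (t1 # ts) \<and> j = 0))"
    using Cons.prems(1) by (intro ext) auto
  ultimately show ?case using Cons by simp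
qed

lemma grid_state_flag:
  "(if \<sigma> ! (p * p) then grid_state p M e r \<sigma> else 0) =
    grid_state p (\<lambda>t j. if e t j then M t j else 0) e r \<sigma>"
  unfolding grid_state_def by (cases "\<sigma> ! (p * p)") (auto intro!: sum.cong sum.neutral)

lemma sum_norm_sq_grid_state:
  assumes "length r = L"
  shows "(\<Sum>\<sigma>\<in>{\<sigma>. length \<sigma> = p * p + 1 + L}. (cmod (grid_state p M e r \<sigma>))\<^sup>2) =
    (\<Sum>t\<in>{1..<p}. \<Sum>j<p. (cmod (M t j))\<^sup>2)"
proof -
  define K where "K = {1..<p} \<times> {..<p}"
  define f where "f = (\<lambda>\<kappa>. grid_string p (snd \<kappa>) (fst \<kappa>) (e (fst \<kappa>) (snd \<kappa>)) r)"
  have "inj_on f K"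
  proof (rule inj_onI)
    fix a b assume "a \<in> K" "b \<in> K" "f a = f b"
    then show "a = b"
      unfolding K_def f_def using grid_string_inj[of "snd a" p "fst a" "snd b" "fst b"] by (auto simp: prod_eq_iff)
  qed
  moreover have "f ` K \<subseteq> {\<sigma>. length \<sigma> = p * p + 1 + L}" unfolding f_def using assms by auto
  moreover have "grid_state p M e r \<sigma> = (\<Sum>\<kappa>\<in>K. M (fst \<kappa>) (snd \<kappa>) * (if \<sigma> = f \<kappa> then 1 else 0))" for \<sigma>
    unfolding grid_state_def K_def f_def by (simp add: sum.cartesian_product split_def)
  ultimately have "(\<Sum>\<sigma>\<in>{\<sigma>. length \<sigma> = p * p + 1 + L}. (cmod (grid_state p M e r \<sigma>))\<^sup>2) =
      (\<Sum>\<kappa>\<in>K. (cmod (M (fst \<kappa>) (snd \<kappa>)))\<^sup>2)"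
    using sum_norm_sq_basis_comb[of K f] finite_lists_length_eq[of "UNIV :: bool set"]
    unfolding K_def by simp
  then show ?thesis unfolding K_def by (simp add: sum.cartesian_product split_def)
qed

lemma sum_flag_grid_state:
  assumes "length r = L" "\<forall>t\<in>{1..<p}. \<forall>j<p. e t j = (j = 0)"
  shows "(\<Sum>\<sigma>\<in>{\<sigma>. length \<sigma> = p * p + 1 + L}. if \<sigma> ! (p * p) then (cmod (grid_state p M e r \<sigma>))\<^sup>2 else 0)
       = (\<Sum>t\<in>{1..<p}. (cmod (M t 0))\<^sup>2)"
proof -
  have "(if \<sigma> ! (p * p) then (cmod (grid_state p M e r \<sigma>))\<^sup>2 else 0) =
      (cmod (grid_state p (\<lambda>t j. if e t j then M t j else 0) e r \<sigma>))\<^sup>2" for \<sigma>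
    using grid_state_flag[of \<sigma> p M e r] by (cases "\<sigma> ! (p * p)") auto
  then have "(\<Sum>\<sigma>\<in>{\<sigma>. length \<sigma> = p * p + 1 + L}. if \<sigma> ! (p * p) then (cmod (grid_state p M e r \<sigma>))\<^sup>2 else 0)
      = (\<Sum>t\<in>{1..<p}. \<Sum>j<p. (cmod (if e t j then M t j else 0))\<^sup>2)"
    using sum_norm_sq_grid_state[OF assms(1)] by simp
  also have "\<dots> = (\<Sum>t\<in>{1..<p}. \<Sum>j<p. if j = 0 then (cmod (M t 0))\<^sup>2 else 0)"
    using assms(2) by (intro sum.cong refl) auto
  finally show ?thesis by simp
qed

lemma sum_flag_grid_state_wrong_length:
  assumes "length r \<noteq> L"
  shows "(\<Sum>\<sigma>\<in>{\<sigma>. length \<sigma> = p * p + 1 + L}. if \<sigma> ! (p * p) then (cmod (grid_state p M e r \<sigma>))\<^sup>2 else 0) = 0"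
  using assms by (intro sum.neutral) (auto simp: grid_state_wrong_length)

section \<open>The first circuit of the verifier\<close>

text \<open>Qubit \<open>m\<close> of the two advice blocks (of \<open>n\<close> one-hot blocks of \<open>p\<close> qubits each) gets a
  Hadamard controlled by the input bit of its block: blocks of the first copy when the bit is 1,
  blocks of the second copy when it is 0.\<close>
definition erase_ctrl :: "nat \<Rightarrow> nat \<Rightarrow> nat \<Rightarrow> nat" where "erase_ctrl n p m = ((m - n) mod (n * p)) div p"
definition erase_ctrl_val :: "nat \<Rightarrow> nat \<Rightarrow> nat \<Rightarrow> bool" where "erase_ctrl_val n p m = (m - n < n * p)"
definition verifier1 :: "nat \<Rightarrow> nat \<Rightarrow> gate list" where
  "verifier1 n p = map (\<lambda>m. (erase_ctrl n p m, m, ctrl_mat (erase_ctrl_val n p m) hadamard)) [n..<n + 2 * n * p]"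

definition one_hot_vec :: "nat \<Rightarrow> nat list \<Rightarrow> bool list" where "one_hot_vec p a = concat (map (\<lambda>y. one_hot y p) a)"

lemma length_one_hot_vec[simp]: "length (one_hot_vec p a) = length a * p"
  unfolding one_hot_vec_def by (induction a) simp_all

lemma nth_one_hot_vec: "i < length a \<Longrightarrow> c < p \<Longrightarrow> one_hot_vec p a ! (i * p + c) = (c = a ! i)"
proof (induction a arbitrary: i)
  case Nil
  then show ?case by simp
next
  case (Cons y a)
  show ?case
  proof (cases i)
    case 0
    then show ?thesis using Cons.prems unfolding one_hot_vec_def by (simp add: nth_append)
  next
    case (Suc i')
    have "one_hot_vec p (y # a) = one_hot y p @ one_hot_vec p a" unfolding one_hot_vec_def by simp
    moreover have "Suc i' * p + c = p + (i' * p + c)" by simp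
    ultimately show ?thesis using Cons Suc by (simp add: nth_append)
  qed
qed

locale protocol_layout =
  fixes n p :: nat and x :: "bool list"
  assumes p2: "p \<ge> 2" and lx: "length x = n"
begin

abbreviation "k \<equiv> n + 2 * n * p"

definition erased :: "nat \<Rightarrow> bool" where
  "erased m \<longleftrightarrow> n \<le> m \<and> m < k \<and> x ! erase_ctrl n p m = erase_ctrl_val n p m"

lemma erase_ctrl_less: assumes "n \<le> m" "m < k" shows "erase_ctrl n p m < n"
proof -
  have np: "n * p > 0" using assms p2 by (cases n) auto
  have "(m - n) mod (n * p) < n * p" using np by simp
  thus ?thesis unfolding erase_ctrl_def using p2 by (simp add: div_less_iff_less_mult)
qed

definition v1_factor :: "bool list \<Rightarrow> nat \<Rightarrow> bool \<Rightarrow> complex" where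
  "v1_factor w m y = (if erased m then hadamard y (w ! m) else (if y = w ! m then 1 else 0))"

lemma run_verifier1_basis:
  assumes "length w = k" "take n w = x"
  shows "run_circuit (verifier1 n p) (basis w) = prod_state k (v1_factor w)"
proof -
  have bw: "basis w = prod_state k (\<lambda>m y. if y = w ! m then 1 else 0)" using basis_eq_prod_state[of w] assms by simp
  have xw: "w ! c = x ! c" if "c < n" for c using assms(2) that by (metis nth_take)
  have "run_circuit (verifier1 n p) (prod_state k (\<lambda>m y. if y = w ! m then 1 else 0)) =
    prod_state k (\<lambda>m'. if m' \<in> set [n..<k] \<and> w ! (erase_ctrl n p m') = erase_ctrl_val n p m'
       then (\<lambda>y. \<Sum>b\<in>UNIV. hadamard y b * (if b = w ! m' then 1 else 0)) else (\<lambda>y. if y = w ! m' then 1 else 0))"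
    unfolding verifier1_def
  proof (rule run_ctrls_prod_state)
    show "distinct [n..<k]" by simp
    show "\<forall>m\<in>set [n..<k]. m < k \<and> erase_ctrl n p m < k \<and> erase_ctrl n p m \<notin> set [n..<k]"
      using erase_ctrl_less by fastforce
    show "\<forall>m\<in>set [n..<k]. (\<lambda>m y. if y = w ! m then 1 else (0::complex)) (erase_ctrl n p m) = (\<lambda>y. if y = w ! erase_ctrl n p m then 1 else 0)"
      by simp
  qed
  also have "\<dots> = prod_state k (v1_factor w)"
  proof -
    have e: "(m' \<in> set [n..<k] \<and> w ! (erase_ctrl n p m') = erase_ctrl_val n p m') = erased m'" for m'
      unfolding erased_def using xw erase_ctrl_less by auto
    have s: "(\<Sum>b\<in>UNIV. hadamard y b * (if b = w ! m' then 1 else 0)) = hadamard y (w ! m')" for y m'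
      unfolding sum_bool by (cases "w ! m'") simp_all
    show ?thesis unfolding e s v1_factor_def by (intro arg_cong[where f = "prod_state k"] ext) simp
  qed
  finally show ?thesis using bw by simp
qed

definition erase_weight :: real where "erase_weight = (\<Prod>m<k. if erased m then 1 / 2 else 1)"

lemma norm_v1_factor_sq: "(cmod (v1_factor w m y))\<^sup>2 = (if erased m then 1 / 2 else (if y = w ! m then 1 else 0))"
  unfolding v1_factor_def using norm_hadamard_sq by simp

lemma norm_prod_v1_factor_sq:
  assumes "length q = k"
  shows "(cmod (prod_state k (v1_factor w) q))\<^sup>2 = erase_weight * (if \<forall>m<k. \<not> erased m \<longrightarrow> q ! m = w ! m then 1 else 0)"
proof -
  have "(cmod (prod_state k (v1_factor w) q))\<^sup>2 = (\<Prod>m<k. (cmod (v1_factor w m (q ! m)))\<^sup>2)"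
    unfolding prod_state_def using assms by (simp add: prod_norm[symmetric] power_mult_distrib prod_power_distrib)
  also have "\<dots> = (\<Prod>m<k. (if erased m then 1 / 2 else 1) * (if \<not> erased m \<longrightarrow> q ! m = w ! m then 1 else 0))"
    unfolding norm_v1_factor_sq by (intro prod.cong) auto
  finally show ?thesis unfolding erase_weight_def prod.distrib by (auto simp: prod_indicator)
qed

lemma sum_norm_prod_v1_factor_sq: "(\<Sum>q\<in>{q. length q = k}. (cmod (prod_state k (v1_factor w) q))\<^sup>2) = 1"
proof -
  have "(\<Sum>q\<in>{q. length q = k}. (cmod (prod_state k (v1_factor w) q))\<^sup>2) =
        (\<Sum>q\<in>{q. length q = k}. \<Prod>m<k. (cmod (v1_factor w m (q ! m)))\<^sup>2)"
    by (intro sum.cong refl) (simp add: prod_state_def prod_norm[symmetric] prod_power_distrib)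
  also have "\<dots> = (\<Prod>m<k. (cmod (v1_factor w m False))\<^sup>2 + (cmod (v1_factor w m True))\<^sup>2)"
    by (rule sum_lists_prod_eq_prod_sum)
  also have "\<dots> = 1" unfolding norm_v1_factor_sq by (intro prod.neutral) auto
  finally show ?thesis .
qed

end

section \<open>The protocol\<close>

definition vecs :: "nat \<Rightarrow> nat \<Rightarrow> nat list set" where "vecs n p = {a. length a = n \<and> set a \<subseteq> {..<p}}"
definition inv_mod :: "nat \<Rightarrow> nat \<Rightarrow> nat" where "inv_mod p t = (SOME u. u < p \<and> [t * u = 1] (mod p))"
definition shift_vec :: "nat \<Rightarrow> nat \<Rightarrow> nat list \<Rightarrow> nat list" where "shift_vec p t a = map (\<lambda>y. (y + p - inv_mod p t) mod p) a"
definition mlext :: "bool list set \<Rightarrow> nat \<Rightarrow> (nat \<Rightarrow> int) \<Rightarrow> int" where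
  "mlext L n y = (\<Sum>s\<in>{s\<in>L. length s = n}. \<Prod>i<n. if s ! i then y i else 1 - y i)"
definition mlext_mod :: "bool list set \<Rightarrow> nat \<Rightarrow> nat \<Rightarrow> nat \<Rightarrow> nat list \<Rightarrow> int" where
  "mlext_mod L n p t a = mlext L n (\<lambda>i. int t * int (a ! i)) mod int p"
definition unit_root :: "nat \<Rightarrow> int \<Rightarrow> complex" where "unit_root p z = cis (2 * pi * real_of_int z / real p)"
definition advice_amp :: "nat \<Rightarrow> nat \<Rightarrow> complex" where "advice_amp n p = complex_of_real (1 / sqrt (real ((p - 1) * p ^ (n + 1))))"
definition advice_string :: "nat \<Rightarrow> nat \<Rightarrow> nat list \<Rightarrow> nat \<Rightarrow> bool list" where
  "advice_string p t a j = one_hot_vec p a @ one_hot_vec p (shift_vec p t a) @ one_hot (j * p + t) (p * p)"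
definition advice_index :: "nat \<Rightarrow> nat \<Rightarrow> (nat \<times> nat list) set" where "advice_index n p = {1..<p} \<times> vecs n p"
text \<open>The advice string for \<open>(t, a, j)\<close> lists \<open>a\<close>, \<open>a - 1/t\<close> (coordinatewise modulo \<open>p\<close>) and
  \<open>(j, t)\<close>, all in one-hot encoding; its amplitude carries the phase \<open>\<omega>\<^bsup>j (1 - f (t a))\<^esup>\<close>.\<close>
definition advice :: "bool list set \<Rightarrow> nat \<Rightarrow> nat \<Rightarrow> qstate" where
  "advice L n p = (\<lambda>s. \<Sum>\<omega>\<in>advice_index n p. \<Sum>j<p. advice_amp n p * unit_root p (int j * (1 - mlext_mod L n p (fst \<omega>) (snd \<omega>)))
      * (if s = advice_string p (fst \<omega>) (snd \<omega>) j then 1 else 0))"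

text \<open>The answer consists of \<open>n\<close> blocks of \<open>p\<close> bits; block \<open>i\<close> encodes the coefficient of
  \<open>\<tau>\<^bsup>i+1\<^esup>\<close> in unary, as its number of set bits. One controlled phase per answer bit and grid point
  multiplies the amplitude of \<open>(j, t)\<close> by \<open>\<omega>\<^bsup>j h(t)\<^esup>\<close>; the rows of Givens rotations then collect the
  sum over \<open>j\<close> in \<open>j = 0\<close>, which the CNOTs flag and the final swap moves to the output qubit.\<close>
definition phase_index :: "nat \<Rightarrow> nat \<Rightarrow> (nat \<times> nat \<times> nat \<times> nat) list" where
  "phase_index n p = concat (map (\<lambda>i. concat (map (\<lambda>c. concat (map (\<lambda>j. map (\<lambda>t. (i, c, j, t)) [0..<p]) [0..<p])) [0..<p])) [0..<n])"
definition phase_answer_qubit :: "nat \<Rightarrow> nat \<times> nat \<times> nat \<times> nat \<Rightarrow> nat" where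
  "phase_answer_qubit p z = (case z of (i, c, j, t) \<Rightarrow> p * p + 1 + i * p + c)"
definition phase_grid_qubit :: "nat \<Rightarrow> nat \<times> nat \<times> nat \<times> nat \<Rightarrow> nat" where
  "phase_grid_qubit p z = (case z of (i, c, j, t) \<Rightarrow> j * p + t)"
definition phase_mat :: "nat \<Rightarrow> nat \<times> nat \<times> nat \<times> nat \<Rightarrow> bool \<Rightarrow> bool \<Rightarrow> complex" where
  "phase_mat p z = (case z of (i, c, j, t) \<Rightarrow> (\<lambda>a b. if a \<and> b then unit_root p (int j * int t ^ (i + 1)) else 1))"
definition verifier2_work :: "nat \<Rightarrow> nat \<Rightarrow> gate list" where
  "verifier2_work n p = map (\<lambda>z. (phase_answer_qubit p z, phase_grid_qubit p z, diag_mat (phase_mat p z))) (phase_index n p)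
     @ concat (map (row_gates p) [1..<p]) @ map (\<lambda>t. (t, p * p, cnot_mat)) [1..<p]"
definition verifier2 :: "nat \<Rightarrow> nat \<Rightarrow> gate list" where
  "verifier2 n p = map (shift_gate (n + 2 * n * p)) (verifier2_work n p) @ [(0, n + 2 * n * p + p * p, swap_mat)]"

definition answer_value :: "nat \<Rightarrow> nat \<Rightarrow> bool list \<Rightarrow> nat \<Rightarrow> int" where
  "answer_value n p r t = (\<Sum>i<n. \<Sum>c<p. if r ! (i * p + c) then int t ^ (i + 1) else 0)"

lemma length_advice_string: "a \<in> vecs n p \<Longrightarrow> length (advice_string p t a j) = 2 * n * p + p * p"
  unfolding advice_string_def vecs_def shift_vec_def by simp

lemma finite_vecs: "finite (vecs n p)"
proof -
  have "vecs n p \<subseteq> {a. set a \<subseteq> {..<p} \<and> length a = n}" unfolding vecs_def by auto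
  then show ?thesis using finite_lists_length_eq[of "{..<p}" n] finite_subset by auto
qed

lemma card_vecs: "card (vecs n p) = p ^ n"
proof -
  have "vecs n p = {xs. set xs \<subseteq> {..<p} \<and> length xs = n}" unfolding vecs_def by auto
  then show ?thesis using card_lists_length_eq[of "{..<p}" n] by simp
qed

lemma finite_advice_index: "finite (advice_index n p)"
  unfolding advice_index_def using finite_vecs by simp

lemma norm_unit_root[simp]: "cmod (unit_root p z) = 1"
  unfolding unit_root_def by simp

lemma norm_advice_amp_sq:
  assumes "p \<ge> 2"
  shows "(cmod (advice_amp n p))\<^sup>2 = 1 / (real (p - 1) * real p ^ (n + 1))"
proof -
  have "real ((p - 1) * p ^ (n + 1)) > 0" using assms by simp
  then have "(cmod (advice_amp n p))\<^sup>2 = 1 / real ((p - 1) * p ^ (n + 1))"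
    unfolding advice_amp_def norm_of_real by (simp add: power_divide)
  then show ?thesis using assms by (simp add: of_nat_diff)
qed

lemma one_hot_inj: "m < L \<Longrightarrow> one_hot m L = one_hot m' L \<Longrightarrow> m = m'"
  by (metis nth_one_hot)

lemma one_hot_vec_inj:
  assumes "length a = n" "length a' = n" "set a \<subseteq> {..<p}" "one_hot_vec p a = one_hot_vec p a'"
  shows "a = a'"
proof (rule nth_equalityI)
  show "length a = length a'" using assms by simp
  fix i assume "i < length a"
  then have i: "i < n" and ai: "a ! i < p" using assms(1,3) by (auto simp: subset_iff)
  have "one_hot_vec p a' ! (i * p + a ! i)"
    using nth_one_hot_vec[of i a "a ! i" p] assms(1,4) i ai by simp
  then show "a ! i = a' ! i" using nth_one_hot_vec[of i a' "a ! i" p] assms(2) i ai by simp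
qed

lemma advice_string_inj:
  assumes "(t, a) \<in> advice_index n p" "(t', a') \<in> advice_index n p" "j < p" "j' < p"
    and eq: "advice_string p t a j = advice_string p t' a' j'"
  shows "t = t' \<and> a = a' \<and> j = j'"
proof -
  have A: "length a = n" "set a \<subseteq> {..<p}" "t < p" "length a' = n" "t' < p"
    using assms(1,2) unfolding advice_index_def vecs_def by auto
  then have "one_hot_vec p a = one_hot_vec p a'" and
    grid: "one_hot (j * p + t) (p * p) = one_hot (j' * p + t') (p * p)"
    using eq unfolding advice_string_def by (simp_all add: shift_vec_def append_eq_append_conv)
  then have "a = a'" using one_hot_vec_inj A by blast
  moreover have "j * p + t = j' * p + t'"
    using one_hot_inj[OF grid_index_less grid] assms(3) A by blast
  ultimately show ?thesis using grid_index_eq_iff[of t p t' j j'] A by simp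
qed

lemma is_state_advice:
  assumes "p \<ge> 2"
  shows "is_state (2 * n * p + p * p) (advice L n p)"
proof -
  define K where "K = advice_index n p \<times> {..<p}"
  define f where "f = (\<lambda>((t, a), j). advice_string p t a j)"
  define M where "M = (\<lambda>((t, a), j). advice_amp n p * unit_root p (int j * (1 - mlext_mod L n p t a)))"
  have advice_eq: "advice L n p s = (\<Sum>\<kappa>\<in>K. M \<kappa> * (if s = f \<kappa> then 1 else 0))" for s
    unfolding advice_def K_def M_def f_def by (simp add: sum.cartesian_product split_def)
  have len: "length (f \<kappa>) = 2 * n * p + p * p" if "\<kappa> \<in> K" for \<kappa>
    using that length_advice_string unfolding K_def advice_index_def f_def by auto
  have "inj_on f K"
    unfolding K_def f_def inj_on_def using advice_string_inj by fastforce
  moreover have "f ` K \<subseteq> {s. length s = 2 * n * p + p * p}" using len by auto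
  ultimately have "sqnorm (2 * n * p + p * p) (advice L n p) = (\<Sum>\<kappa>\<in>K. (cmod (M \<kappa>))\<^sup>2)"
    unfolding sqnorm_def advice_eq using finite_advice_index finite_lists_length_eq[of "UNIV :: bool set"]
    by (intro sum_norm_sq_basis_comb) (simp_all add: K_def)
  also have "\<dots> = real (card K) * (cmod (advice_amp n p))\<^sup>2"
    unfolding M_def by (simp add: norm_mult split_def)
  also have "\<dots> = 1"
    using assms by (simp add: K_def advice_index_def card_cartesian_product card_vecs
      norm_advice_amp_sq of_nat_diff field_simps)
  finally show ?thesis
    unfolding is_state_def advice_eq using len by (auto intro!: sum.neutral)
qed

locale protocol = protocol_layout +
  fixes L :: "bool list set"
begin

definition honest_word :: "nat \<times> nat list \<Rightarrow> bool list" where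
  "honest_word \<omega> = x @ one_hot_vec p (snd \<omega>) @ one_hot_vec p (shift_vec p (fst \<omega>) (snd \<omega>))"

definition grid_register :: "nat \<times> nat list \<Rightarrow> qstate" where
  "grid_register \<omega> = (\<lambda>\<rho>. \<Sum>j<p. unit_root p (int j * (1 - mlext_mod L n p (fst \<omega>) (snd \<omega>))) * (if \<rho> = one_hot (j * p + fst \<omega>) (p * p) @ [False] then 1 else 0))"

lemma length_honest_word: "\<omega> \<in> advice_index n p \<Longrightarrow> length (honest_word \<omega>) = k"
  unfolding honest_word_def advice_index_def vecs_def shift_vec_def using lx by auto

lemma take_honest_word: "\<omega> \<in> advice_index n p \<Longrightarrow> take n (honest_word \<omega>) = x"
  unfolding honest_word_def using lx by simp

lemma initial_state_eq:
  "tensor n (basis x) (tensor (2 * n * p + p * p) (advice L n p) (basis [False])) =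
   (\<lambda>s. \<Sum>\<omega>\<in>advice_index n p. advice_amp n p * tensor k (basis (honest_word \<omega>)) (grid_register \<omega>) s)"
proof -
  define c where "c \<omega> j = unit_root p (int j * (1 - mlext_mod L n p (fst \<omega>) (snd \<omega>)))" for \<omega> j
  define u where "u (\<omega> :: nat \<times> nat list) j = one_hot (j * p + fst \<omega>) (p * p) @ [False]" for \<omega> j
  have advice_eq: "advice L n p = (\<lambda>s. \<Sum>\<omega>\<in>advice_index n p. advice_amp n p *
      (\<Sum>j<p. c \<omega> j * basis (advice_string p (fst \<omega>) (snd \<omega>) j) s))"
    unfolding advice_def basis_def c_def by (simp add: sum_distrib_left mult.assoc)
  have grid_eq: "grid_register \<omega> = (\<lambda>\<rho>. \<Sum>j<p. c \<omega> j * basis (u \<omega> j) \<rho>)" for \<omega>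
    unfolding grid_register_def basis_def c_def u_def ..
  have word_eq: "x @ advice_string p (fst \<omega>) (snd \<omega>) j @ [False] = honest_word \<omega> @ u \<omega> j" for \<omega> j
    unfolding advice_string_def honest_word_def u_def by simp
  have "tensor k (basis (honest_word \<omega>)) (grid_register \<omega>) =
      (\<lambda>s. \<Sum>j<p. c \<omega> j * basis (x @ advice_string p (fst \<omega>) (snd \<omega>) j @ [False]) s)"
    if "\<omega> \<in> advice_index n p" for \<omega>
    unfolding grid_eq word_eq tensor_sum_right
    using tensor_basis_basis[OF length_honest_word[OF that]] by simp
  moreover have "tensor n (basis x) (tensor (2 * n * p + p * p) (basis (advice_string p (fst \<omega>) (snd \<omega>) j)) (basis [False]))
      = basis (x @ advice_string p (fst \<omega>) (snd \<omega>) j @ [False])" if "\<omega> \<in> advice_index n p" for \<omega> j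
    using that length_advice_string lx unfolding advice_index_def by (auto simp: tensor_basis_basis)
  ultimately show ?thesis
    unfolding advice_eq tensor_sum_left tensor_sum_right by (auto intro!: sum.cong)
qed

lemma verifier1_acts_left: "\<forall>g\<in>set (verifier1 n p). fst g < k \<and> fst (snd g) < k"
  unfolding verifier1_def using erase_ctrl_less by fastforce

abbreviation post_v1 :: "nat \<times> nat list \<Rightarrow> qstate" where "post_v1 \<omega> \<equiv> prod_state k (v1_factor (honest_word \<omega>))"

lemma run_verifier1_initial:
  "run_circuit (verifier1 n p) (tensor n (basis x) (tensor (2 * n * p + p * p) (advice L n p) (basis [False]))) =
   (\<lambda>s. \<Sum>\<omega>\<in>advice_index n p. advice_amp n p * tensor k (post_v1 \<omega>) (grid_register \<omega>) s)"
proof -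
  have "run_circuit (verifier1 n p) (\<lambda>s. \<Sum>\<omega>\<in>advice_index n p. advice_amp n p * tensor k (basis (honest_word \<omega>)) (grid_register \<omega>) s) =
        (\<lambda>s. \<Sum>\<omega>\<in>advice_index n p. advice_amp n p * run_circuit (verifier1 n p) (tensor k (basis (honest_word \<omega>)) (grid_register \<omega>)) s)"
    by (rule run_circuit_sum[OF finite_advice_index])
  also have "\<dots> = (\<lambda>s. \<Sum>\<omega>\<in>advice_index n p. advice_amp n p * tensor k (post_v1 \<omega>) (grid_register \<omega>) s)"
  proof (intro ext sum.cong refl)
    fix s \<omega> assume o: "\<omega> \<in> advice_index n p"
    have "run_circuit (verifier1 n p) (tensor k (basis (honest_word \<omega>)) (grid_register \<omega>)) = tensor k (run_circuit (verifier1 n p) (basis (honest_word \<omega>))) (grid_register \<omega>)"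
      by (rule run_circuit_tensor_left[OF verifier1_acts_left])
    also have "run_circuit (verifier1 n p) (basis (honest_word \<omega>)) = post_v1 \<omega>"
      by (rule run_verifier1_basis[OF length_honest_word[OF o] take_honest_word[OF o]])
    finally show "advice_amp n p * run_circuit (verifier1 n p) (tensor k (basis (honest_word \<omega>)) (grid_register \<omega>)) s = advice_amp n p * tensor k (post_v1 \<omega>) (grid_register \<omega>) s"
      by simp
  qed
  finally show ?thesis unfolding initial_state_eq .
qed

definition grid_amp :: "bool list \<Rightarrow> nat \<Rightarrow> nat \<Rightarrow> complex" where
  "grid_amp q t j = (\<Sum>a\<in>vecs n p. advice_amp n p * post_v1 (t, a) q * unit_root p (int j * (1 - mlext_mod L n p t a)))"

lemma grid_state_grid_amp:
  "grid_state p (grid_amp q) (\<lambda>_ _. False) r \<rho> =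
     (\<Sum>\<omega>\<in>advice_index n p. advice_amp n p * post_v1 \<omega> q * grid_register \<omega> (take (p * p + 1) \<rho>)) * (if drop (p * p + 1) \<rho> = r then 1 else 0)"
proof -
  have ind: "(if take (p * p + 1) \<rho> = one_hot (j * p + t) (p * p) @ [False] then 1 else 0) * (if drop (p * p + 1) \<rho> = r then 1 else 0)
     = (if \<rho> = grid_string p j t False r then 1 else (0::complex))" for \<rho> j t
  proof -
    have "length (one_hot (j * p + t) (p * p) @ [False]) = p * p + 1" by simp
    from take_drop_eq_append[OF this, of \<rho> r] show ?thesis unfolding grid_string_def by auto
  qed
  have "(\<Sum>\<omega>\<in>advice_index n p. advice_amp n p * post_v1 \<omega> q * grid_register \<omega> (take (p * p + 1) \<rho>)) * (if drop (p * p + 1) \<rho> = r then 1 else 0)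
      = (\<Sum>\<omega>\<in>advice_index n p. \<Sum>j<p. advice_amp n p * post_v1 \<omega> q * unit_root p (int j * (1 - mlext_mod L n p (fst \<omega>) (snd \<omega>))) *
           (if \<rho> = grid_string p j (fst \<omega>) False r then 1 else 0))"
    unfolding grid_register_def sum_distrib_right sum_distrib_left
    by (intro sum.cong refl) (simp add: ind[symmetric] mult_ac)
  also have "\<dots> = (\<Sum>t\<in>{1..<p}. \<Sum>a\<in>vecs n p. \<Sum>j<p. advice_amp n p * post_v1 (t, a) q * unit_root p (int j * (1 - mlext_mod L n p t a)) *
           (if \<rho> = grid_string p j t False r then 1 else 0))"
    unfolding advice_index_def sum.cartesian_product' by simp
  also have "\<dots> = (\<Sum>t\<in>{1..<p}. \<Sum>j<p. \<Sum>a\<in>vecs n p. advice_amp n p * post_v1 (t, a) q * unit_root p (int j * (1 - mlext_mod L n p t a)) *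
           (if \<rho> = grid_string p j t False r then 1 else 0))"
    by (intro sum.cong refl) (rule sum.swap)
  also have "\<dots> = grid_state p (grid_amp q) (\<lambda>_ _. False) r \<rho>"
    unfolding grid_state_def grid_amp_def by (simp add: sum_distrib_right)
  finally show ?thesis by simp
qed

lemma post_measurement_state:
  assumes "length q = k"
  shows "tensor (k + p * p + 1) (proj_prefix k q (\<lambda>s. \<Sum>\<omega>\<in>advice_index n p. advice_amp n p * tensor k (post_v1 \<omega>) (grid_register \<omega>) s)) (basis r)
       = tensor k (basis q) (grid_state p (grid_amp q) (\<lambda>_ _. False) r)"
proof (rule ext)
  fix s :: "bool list"
  have tk: "take k (take (k + p * p + 1) s) = take k s" by simp
  have dk: "drop k (take (k + p * p + 1) s) = take (p * p + 1) (drop k s)" by (simp add: drop_take)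
  have dm: "drop (k + p * p + 1) s = drop (p * p + 1) (drop k s)" by (simp add: algebra_simps)
  show "tensor (k + p * p + 1) (proj_prefix k q (\<lambda>s. \<Sum>\<omega>\<in>advice_index n p. advice_amp n p * tensor k (post_v1 \<omega>) (grid_register \<omega>) s)) (basis r) s
       = tensor k (basis q) (grid_state p (grid_amp q) (\<lambda>_ _. False) r) s"
  proof (cases "take k s = q")
    case True
    show ?thesis unfolding tensor_def proj_prefix_def basis_def tk dk dm grid_state_grid_amp using True
      by (simp add: sum_distrib_right mult_ac)
  next
    case False
    show ?thesis unfolding tensor_def proj_prefix_def basis_def tk using False by simp
  qed
qed

end

section \<open>The acceptance probability\<close>

lemma unit_root_add: "unit_root p (a + b) = unit_root p a * unit_root p b"
  unfolding unit_root_def cis_mult by (simp add: add_divide_distrib distrib_left)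

lemma unit_root_0[simp]: "unit_root p 0 = 1" unfolding unit_root_def by simp

lemma prod_unit_root: "finite A \<Longrightarrow> (\<Prod>x\<in>A. unit_root p (f x)) = unit_root p (\<Sum>x\<in>A. f x)"
  by (induction A rule: finite_induct) (simp_all add: unit_root_add)

lemma unit_root_if: "(if b then unit_root p z else 1) = unit_root p (if b then z else 0)" by simp

lemma sum_unit_root_pow:
  assumes "p > 0"
  shows "(\<Sum>j<p. unit_root p (int j * C)) = (if int p dvd C then of_nat p else 0)"
proof -
  define z where "z = cis (2 * pi * real_of_int C / real p)"
  have pz: "unit_root p (int j * C) = z ^ j" for j
    unfolding z_def unit_root_def DeMoivre by (simp add: algebra_simps)
  show ?thesis
  proof (cases "int p dvd C")
    case True
    then obtain m where m: "C = int p * m" by (elim dvdE)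
    have "2 * pi * real_of_int C / real p = 2 * pi * real_of_int m" unfolding m using assms by simp
    moreover have "cis (2 * pi * real_of_int m) = 1" by (rule cis_multiple_2pi) simp
    ultimately have "z = 1" unfolding z_def by simp
    thus ?thesis unfolding pz using True by simp
  next
    case False
    have z1: "z \<noteq> 1"
    proof
      assume "z = 1"
      hence "Re (cis (2 * pi * real_of_int C / real p)) = 1" unfolding z_def by simp
      hence "cos (2 * pi * real_of_int C / real p) = 1" by simp
      then obtain m :: int where m: "2 * pi * real_of_int C / real p = real_of_int m * 2 * pi"
        using cos_one_2pi_int by blast
      hence "real_of_int C = real_of_int m * real p" using assms by (simp add: field_simps)
      hence "C = m * int p" by (metis of_int_eq_iff of_int_mult of_int_of_nat_eq)
      thus False using False by simp
    qed
    have zp: "z ^ p = 1" unfolding z_def DeMoivre using assms by simp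
    have "(\<Sum>j<p. z ^ j) = (1 - z ^ p) / (1 - z)" using z1 by (simp add: sum_gp_strict)
    also have "\<dots> = 0" using zp by simp
    finally show ?thesis unfolding pz using False by simp
  qed
qed

lemma norm_sum_sq_single_support:
  fixes f :: "'a \<Rightarrow> complex"
  assumes "finite A" "\<forall>a\<in>A. \<forall>b\<in>A. f a \<noteq> 0 \<longrightarrow> f b \<noteq> 0 \<longrightarrow> a = b"
  shows "(cmod (\<Sum>a\<in>A. f a))\<^sup>2 = (\<Sum>a\<in>A. (cmod (f a))\<^sup>2)"
proof (cases "\<exists>a0\<in>A. f a0 \<noteq> 0")
  case True
  then obtain a0 where a0: "a0 \<in> A" "f a0 \<noteq> 0" by blast
  have z: "f a = 0" if "a \<in> A" "a \<noteq> a0" for a using assms(2) a0 that by blast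
  have "(\<Sum>a\<in>A. f a) = f a0"
    using sum.remove[OF assms(1) a0(1), of f] z by (simp add: sum.neutral)
  moreover have "(\<Sum>a\<in>A. (cmod (f a))\<^sup>2) = (cmod (f a0))\<^sup>2"
    using sum.remove[OF assms(1) a0(1), of "\<lambda>a. (cmod (f a))\<^sup>2"] z by (simp add: sum.neutral)
  ultimately show ?thesis by simp
next
  case False
  thus ?thesis by simp
qed

lemma prod_single: fixes a p :: nat shows "a < p \<Longrightarrow> (\<Prod>k<p. if k = a then f k else 1) = (f a :: complex)"
proof -
  assume a: "a < p"
  have "(\<Prod>k<p. if k = a then f k else 1) = (if a = a then f a else 1) * (\<Prod>k\<in>{..<p}-{a}. if k = a then f k else 1)"
    by (rule prod.remove) (simp_all add: a)
  also have "(\<Prod>k\<in>{..<p}-{a}. if k = a then f k else 1) = 1" by (intro prod.neutral) auto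
  finally show ?thesis by simp
qed

lemma prod2_single: fixes j t p :: nat assumes "j < p" "t < p"
  shows "(\<Prod>j'<p. \<Prod>t'<p. if j' = j \<and> t' = t then Y else 1) = (Y :: complex)"
proof -
  have "(\<Prod>t'<p. if j' = j \<and> t' = t then Y else 1) = (if j' = j then Y else 1)" for j'
  proof (cases "j' = j")
    case True
    then show ?thesis using prod_single[OF assms(2), of "\<lambda>_. Y"] by simp
  next
    case False
    then show ?thesis by simp
  qed
  hence "(\<Prod>j'<p. \<Prod>t'<p. if j' = j \<and> t' = t then Y else 1) = (\<Prod>j'<p. if j' = j then Y else 1)"
    by (intro prod.cong refl) simp
  also have "\<dots> = Y" using prod_single[OF assms(1), of "\<lambda>_. Y"] by simp
  finally show ?thesis .
qed

lemma grid_string_nth_answer_block: "grid_string p j t e r ! (p * p + 1 + i * p + c) = r ! (i * p + c)"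
  using grid_string_nth_answer[of p j t e r "i * p + c"] by (simp add: add.assoc)

lemma phase_product:
  assumes "j < p" "t < p"
  shows "prod_list (map (\<lambda>z. phase_mat p z (grid_string p j t e r ! phase_answer_qubit p z) (grid_string p j t e r ! phase_grid_qubit p z)) (phase_index n p))
       = unit_root p (int j * answer_value n p r t)"
proof -
  have F: "phase_mat p (i, c, j', t') (grid_string p j t e r ! phase_answer_qubit p (i, c, j', t')) (grid_string p j t e r ! phase_grid_qubit p (i, c, j', t'))
      = (if j' = j \<and> t' = t then (if r ! (i * p + c) then unit_root p (int j * int t ^ (i + 1)) else 1) else 1)"
    if "j' < p" "t' < p" for i c j' t'
  proof -
    have "grid_string p j t e r ! (j' * p + t') = (j = j' \<and> t = t')" using grid_string_nth_grid[of j' p t' t j e r] that assms by simp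
    thus ?thesis unfolding phase_mat_def phase_answer_qubit_def phase_grid_qubit_def using grid_string_nth_answer_block[of p j t e r i c] by auto
  qed
  have "prod_list (map (\<lambda>z. phase_mat p z (grid_string p j t e r ! phase_answer_qubit p z) (grid_string p j t e r ! phase_grid_qubit p z)) (phase_index n p))
      = (\<Prod>i<n. \<Prod>c<p. \<Prod>j'<p. \<Prod>t'<p. phase_mat p (i, c, j', t') (grid_string p j t e r ! phase_answer_qubit p (i, c, j', t')) (grid_string p j t e r ! phase_grid_qubit p (i, c, j', t')))"
    unfolding phase_index_def by (simp add: prod_list_map_concat prod_list_map_upt map_map o_def)
  also have "\<dots> = (\<Prod>i<n. \<Prod>c<p. \<Prod>j'<p. \<Prod>t'<p. (if j' = j \<and> t' = t then (if r ! (i * p + c) then unit_root p (int j * int t ^ (i + 1)) else 1) else 1))"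
    by (intro prod.cong refl) (simp add: F)
  also have "\<dots> = (\<Prod>i<n. \<Prod>c<p. (if r ! (i * p + c) then unit_root p (int j * int t ^ (i + 1)) else 1))"
    by (intro prod.cong refl) (rule prod2_single[OF assms])
  also have "\<dots> = (\<Prod>i<n. \<Prod>c<p. unit_root p (if r ! (i * p + c) then int j * int t ^ (i + 1) else 0))"
    by (simp only: unit_root_if)
  also have "\<dots> = unit_root p (\<Sum>i<n. \<Sum>c<p. if r ! (i * p + c) then int j * int t ^ (i + 1) else 0)"
    by (simp add: prod_unit_root)
  also have "(\<Sum>i<n. \<Sum>c<p. if r ! (i * p + c) then int j * int t ^ (i + 1) else 0) = int j * answer_value n p r t"
    unfolding answer_value_def sum_distrib_left by (intro sum.cong refl) simp
  finally show ?thesis .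
qed

context protocol
begin

definition phased_amp :: "bool list \<Rightarrow> bool list \<Rightarrow> nat \<Rightarrow> nat \<Rightarrow> complex" where
  "phased_amp q r t j = unit_root p (int j * answer_value n p r t) * grid_amp q t j"

definition kicked_amp :: "bool list \<Rightarrow> bool list \<Rightarrow> nat \<Rightarrow> nat \<Rightarrow> complex" where
  "kicked_amp q r t j = prod_list (map (\<lambda>z. phase_mat p z (grid_string p j t False r ! phase_answer_qubit p z)
     (grid_string p j t False r ! phase_grid_qubit p z)) (phase_index n p)) * grid_amp q t j"

lemma run_verifier2_work:
  "run_circuit (verifier2_work n p) (grid_state p (grid_amp q) (\<lambda>_ _. False) r) =
   grid_state p (fold (row_update p) [1..<p] (kicked_amp q r)) (\<lambda>t j. False \<noteq> (t \<in> set [1..<p] \<and> j = 0)) r"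
  unfolding verifier2_work_def run_circuit_append run_diags_grid_state kicked_amp_def
  by (simp add: run_all_row_gates run_cnots_grid_state)

lemma final_amp:
  assumes "t \<in> {1..<p}"
  shows "fold (row_update p) [1..<p] (kicked_amp q r) t 0 = of_real (1 / sqrt (real p)) * (\<Sum>j<p. phased_amp q r t j)"
proof -
  have "fold (row_update p) [1..<p] (kicked_amp q r) t 0 = of_real (1 / sqrt (real p)) * (\<Sum>j<p. kicked_amp q r t j)"
    using assms p2 by (intro fold_row_update_0) auto
  also have "(\<Sum>j<p. kicked_amp q r t j) = (\<Sum>j<p. phased_amp q r t j)"
    unfolding phased_amp_def kicked_amp_def using assms by (intro sum.cong refl) (simp add: phase_product)
  finally show ?thesis .
qed

lemma accept_weight_verifier2_work:
  "(\<Sum>\<rho>\<in>{\<rho>. length \<rho> = p * p + 1 + n * p}. if \<rho> ! (p * p)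
      then (cmod (run_circuit (verifier2_work n p) (grid_state p (grid_amp q) (\<lambda>_ _. False) r) \<rho>))\<^sup>2 else 0)
    = (if length r = n * p
       then (\<Sum>t\<in>{1..<p}. (cmod (of_real (1 / sqrt (real p)) * (\<Sum>j<p. phased_amp q r t j)))\<^sup>2) else 0)"
proof (cases "length r = n * p")
  case True
  then show ?thesis
    unfolding run_verifier2_work using sum_flag_grid_state[OF True] final_amp by simp
next
  case False
  then show ?thesis unfolding run_verifier2_work using sum_flag_grid_state_wrong_length[OF False] by simp
qed

lemma acc_prob_formula:
  "acc_prob (2 * n * p + p * p) 1 k (n * p) (advice L n p) (verifier1 n p) (verifier2 n p) x P =
   (\<Sum>q\<in>{q. length q = k}. if length (P q) = n * p
        then (\<Sum>t\<in>{1..<p}. (cmod (of_real (1 / sqrt (real p)) * (\<Sum>j<p. phased_amp q (P q) t j)))\<^sup>2) else 0)"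
proof -
  define \<phi> where "\<phi> = run_circuit (verifier1 n p)
    (tensor n (basis x) (tensor (2 * n * p + p * p) (advice L n p) (basis (replicate 1 False))))"
  have \<phi>_eq: "\<phi> = (\<lambda>s. \<Sum>\<omega>\<in>advice_index n p. advice_amp n p * tensor k (post_v1 \<omega>) (grid_register \<omega>) s)"
    unfolding \<phi>_def using run_verifier1_initial by simp
  have size: "n + (2 * n * p + p * p) + 1 = k + p * p + 1" "k + p * p + 1 + n * p = k + (p * p + 1 + n * p)"
    by simp_all
  have "sqnorm (k + p * p + 1 + n * p) (proj_prefix 1 [True] (run_circuit (verifier2 n p)
        (tensor (k + p * p + 1) (proj_prefix k q \<phi>) (basis (P q))))) =
      (\<Sum>\<rho>\<in>{\<rho>. length \<rho> = p * p + 1 + n * p}. if \<rho> ! (p * p)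
        then (cmod (run_circuit (verifier2_work n p) (grid_state p (grid_amp q) (\<lambda>_ _. False) (P q)) \<rho>))\<^sup>2 else 0)"
    if "length q = k" for q
  proof -
    have "\<forall>s. length s \<noteq> k \<longrightarrow> basis q s = 0" unfolding basis_def using that by auto
    then have "run_circuit (verifier2 n p) (tensor (k + p * p + 1) (proj_prefix k q \<phi>) (basis (P q))) =
        apply_gate (0, k + p * p, swap_mat)
          (tensor k (basis q) (run_circuit (verifier2_work n p) (grid_state p (grid_amp q) (\<lambda>_ _. False) (P q))))"
      unfolding \<phi>_eq post_measurement_state[OF that] verifier2_def run_circuit_append
      by (simp add: run_circuit_shift_tensor)
    then have "sqnorm (k + p * p + 1 + n * p) (proj_prefix 1 [True] (run_circuit (verifier2 n p)
        (tensor (k + p * p + 1) (proj_prefix k q \<phi>) (basis (P q))))) =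
      (\<Sum>s\<in>{s. length s = k + p * p + 1 + n * p}. if s ! (k + p * p) then (cmod (tensor k (basis q)
        (run_circuit (verifier2_work n p) (grid_state p (grid_amp q) (\<lambda>_ _. False) (P q))) s))\<^sup>2 else 0)"
      using sqnorm_accept_swap[of "k + p * p" "k + p * p + 1 + n * p"] p2 by simp
    also have "\<dots> = (\<Sum>\<rho>\<in>{\<rho>. length \<rho> = p * p + 1 + n * p}. if \<rho> ! (p * p)
        then (cmod (run_circuit (verifier2_work n p) (grid_state p (grid_amp q) (\<lambda>_ _. False) (P q)) \<rho>))\<^sup>2 else 0)"
      unfolding size(2) by (rule sum_flag_tensor_basis[OF that])
    finally show ?thesis .
  qed
  then show ?thesis
    unfolding acc_prob_def Let_def lx size(1) \<phi>_def[symmetric] accept_weight_verifier2_work[symmetric]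
    by (intro sum.cong refl) simp
qed

end

section \<open>Questions consistent with the advice\<close>

context protocol
begin

text \<open>For coordinate \<open>i\<close> the measurement reveals the block that was not erased: that of \<open>a\<^sub>i\<close> if
  \<open>x\<^sub>i = 0\<close> and that of \<open>a\<^sub>i - 1/t\<close> if \<open>x\<^sub>i = 1\<close>. Its value is the \<open>i\<close>-th coordinate of a direction \<open>d\<close>
  with \<open>t a = x + t d\<close> modulo \<open>p\<close>.\<close>
definition sel_pos :: "nat \<Rightarrow> nat \<Rightarrow> nat" where
  "sel_pos i c = n + (if x ! i then n * p else 0) + i * p + c"

definition sel_value :: "nat \<Rightarrow> nat list \<Rightarrow> nat \<Rightarrow> nat" where
  "sel_value t a i = (if x ! i then shift_vec p t a ! i else a ! i)"

definition consistent :: "bool list \<Rightarrow> nat \<Rightarrow> nat list \<Rightarrow> bool" where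
  "consistent q t a \<longleftrightarrow> (\<forall>m<k. \<not> erased m \<longrightarrow> q ! m = honest_word (t, a) ! m)"

lemma erase_ctrl_first: "i < n \<Longrightarrow> c < p \<Longrightarrow> erase_ctrl n p (n + i * p + c) = i \<and> erase_ctrl_val n p (n + i * p + c)"
  unfolding erase_ctrl_def erase_ctrl_val_def using block_index_less[of i n c p] by simp

lemma erase_ctrl_second: "i < n \<Longrightarrow> c < p \<Longrightarrow> erase_ctrl n p (n + n * p + i * p + c) = i \<and> \<not> erase_ctrl_val n p (n + n * p + i * p + c)"
proof -
  assume a: "i < n" "c < p"
  have "n + n * p + i * p + c - n = n * p + (i * p + c)" by simp
  moreover have "(n * p + (i * p + c)) mod (n * p) = i * p + c" using block_index_less[OF a] by simp
  ultimately show ?thesis unfolding erase_ctrl_def erase_ctrl_val_def using a by simp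
qed

lemma honest_word_first: "(t, a) \<in> advice_index n p \<Longrightarrow> i < n \<Longrightarrow> c < p \<Longrightarrow> honest_word (t, a) ! (n + i * p + c) = (c = a ! i)"
proof -
  assume o: "(t, a) \<in> advice_index n p" and ic: "i < n" "c < p"
  have la: "length a = n" using o unfolding advice_index_def vecs_def by simp
  have "honest_word (t, a) ! (n + i * p + c) = (one_hot_vec p a @ one_hot_vec p (shift_vec p t a)) ! (i * p + c)"
    unfolding honest_word_def using lx by (simp add: nth_append add.assoc)
  also have "\<dots> = one_hot_vec p a ! (i * p + c)" using block_index_less[OF ic] la by (simp add: nth_append)
  also have "\<dots> = (c = a ! i)" using nth_one_hot_vec[of i a c p] ic la by simp
  finally show ?thesis .
qed

lemma honest_word_second: "(t, a) \<in> advice_index n p \<Longrightarrow> i < n \<Longrightarrow> c < p \<Longrightarrow> honest_word (t, a) ! (n + n * p + i * p + c) = (c = shift_vec p t a ! i)"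
proof -
  assume o: "(t, a) \<in> advice_index n p" and ic: "i < n" "c < p"
  have la: "length a = n" using o unfolding advice_index_def vecs_def by simp
  have "honest_word (t, a) ! (n + n * p + i * p + c) = (one_hot_vec p a @ one_hot_vec p (shift_vec p t a)) ! (n * p + (i * p + c))"
    unfolding honest_word_def using lx by (simp add: nth_append add.assoc)
  also have "\<dots> = one_hot_vec p (shift_vec p t a) ! (i * p + c)" using la by (simp add: nth_append)
  also have "\<dots> = (c = shift_vec p t a ! i)" using nth_one_hot_vec[of i "shift_vec p t a" c p] ic la by (simp add: shift_vec_def)
  finally show ?thesis .
qed

lemma sel_pos_less: "i < n \<Longrightarrow> c < p \<Longrightarrow> sel_pos i c < k"
  unfolding sel_pos_def using block_index_less[of i n c p] by auto

lemma sel_pos_not_erased: "i < n \<Longrightarrow> c < p \<Longrightarrow> \<not> erased (sel_pos i c)"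
  unfolding erased_def sel_pos_def using erase_ctrl_first erase_ctrl_second by (cases "x ! i") (simp_all add: add.assoc)

lemma honest_word_sel_pos: "(t, a) \<in> advice_index n p \<Longrightarrow> i < n \<Longrightarrow> c < p \<Longrightarrow> honest_word (t, a) ! sel_pos i c = (c = sel_value t a i)"
  unfolding sel_pos_def sel_value_def using honest_word_first honest_word_second by (cases "x ! i") (simp_all add: add.assoc)

lemma not_erased_eq_sel_pos:
  assumes "n \<le> m" "m < k" "\<not> erased m"
  obtains i c where "i < n" "c < p" "m = sel_pos i c"
proof -
  have pp: "p > 0" using p2 by simp
  show ?thesis
  proof (cases "m < n + n * p")
    case True
    define i c where "i = (m - n) div p" and "c = (m - n) mod p"
    have mic: "m = n + i * p + c" and c: "c < p" unfolding i_def c_def using assms(1) pp by simp_all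
    have i: "i < n" unfolding i_def using True assms(1) pp by (simp add: div_less_iff_less_mult)
    have "\<not> x ! i" using assms(3) erase_ctrl_first[OF i c] True unfolding erased_def mic by auto
    then show ?thesis using that[OF i c] unfolding sel_pos_def mic by simp
  next
    case False
    define i c where "i = (m - n - n * p) div p" and "c = (m - n - n * p) mod p"
    have mic: "m = n + n * p + i * p + c" and c: "c < p" unfolding i_def c_def using False pp by simp_all
    have i: "i < n" unfolding i_def using False assms(2) pp by (simp add: div_less_iff_less_mult)
    have "x ! i" using assms(3) erase_ctrl_second[OF i c] assms(2) unfolding erased_def mic by auto
    then show ?thesis using that[OF i c] unfolding sel_pos_def mic by simp
  qed
qed

lemma consistent_iff:
  assumes o: "(t, a) \<in> advice_index n p" and lq: "length q = k"
  shows "consistent q t a \<longleftrightarrow> take n q = x \<and> (\<forall>i<n. \<forall>c<p. q ! sel_pos i c = (c = sel_value t a i))"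
proof
  assume C: "consistent q t a"
  have "q ! m = x ! m" if "m < n" for m
    using C that lx unfolding consistent_def erased_def honest_word_def by (auto simp: nth_append)
  then have "take n q = x" using lq lx by (intro nth_equalityI) auto
  moreover have "q ! sel_pos i c = (c = sel_value t a i)" if "i < n" "c < p" for i c
    using C sel_pos_less[OF that] sel_pos_not_erased[OF that] honest_word_sel_pos[OF o that]
    unfolding consistent_def by simp
  ultimately show "take n q = x \<and> (\<forall>i<n. \<forall>c<p. q ! sel_pos i c = (c = sel_value t a i))" by simp
next
  assume R: "take n q = x \<and> (\<forall>i<n. \<forall>c<p. q ! sel_pos i c = (c = sel_value t a i))"
  show "consistent q t a" unfolding consistent_def
  proof (intro allI impI)
    fix m assume m: "m < k" "\<not> erased m"
    show "q ! m = honest_word (t, a) ! m"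
    proof (cases "m < n")
      case True
      then have "q ! m = take n q ! m" by simp
      then show ?thesis using R True lx unfolding honest_word_def by (simp add: nth_append)
    next
      case False
      then obtain i c where "i < n" "c < p" "m = sel_pos i c"
        using not_erased_eq_sel_pos m by (metis not_le)
      then show ?thesis using R honest_word_sel_pos[OF o] by simp
    qed
  qed
qed

end

lemma inv_mod_spec:
  assumes "prime p" "t \<in> {1..<p}"
  shows "inv_mod p t < p \<and> [t * inv_mod p t = 1] (mod p)"
proof -
  have "\<not> p dvd t" using assms(2) by (auto dest: dvd_imp_le)
  hence "coprime p t" by (rule prime_imp_coprime[OF assms(1)])
  hence "coprime t p" by (simp add: coprime_commute)
  then obtain y where y: "[t * y = Suc 0] (mod p)" using cong_solve_coprime_nat by blast
  have p0: "p > 0" using assms(1) prime_gt_0_nat by simp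
  have "[t * (y mod p) = t * y] (mod p)" by (simp add: cong_def mod_mult_right_eq)
  hence "[t * (y mod p) = 1] (mod p)" using y by (metis One_nat_def cong_trans)
  moreover have "y mod p < p" using p0 by simp
  ultimately have "\<exists>u. u < p \<and> [t * u = 1] (mod p)" by blast
  thus ?thesis unfolding inv_mod_def by (rule someI_ex)
qed

lemma mod_shift_inj:
  fixes y y' u p :: nat
  assumes "y < p" "y' < p" "u \<le> p" "(y + p - u) mod p = (y' + p - u) mod p"
  shows "y = y'"
proof -
  have "(y + (p - u)) mod p = (y' + (p - u)) mod p" using assms by simp
  hence "[y + (p - u) = y' + (p - u)] (mod p)" by (simp add: cong_def)
  hence "[y = y'] (mod p)" by (simp add: cong_add_rcancel_nat)
  thus ?thesis using assms(1,2) by (simp add: cong_def)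
qed

lemma mod_shift_back:
  fixes d u p :: nat
  assumes "d < p" "u \<le> p"
  shows "((d + u) mod p + p - u) mod p = d"
proof -
  have "((d + u) mod p + p - u) mod p = ((d + u) mod p + (p - u)) mod p" using assms by simp
  also have "\<dots> = (d + u + (p - u)) mod p" by (simp add: mod_add_left_eq)
  also have "d + u + (p - u) = d + p" using assms by simp
  finally show ?thesis using assms by simp
qed

locale prime_protocol = protocol +
  assumes pp: "prime p"
begin

lemma sel_value_less: "(t, a) \<in> advice_index n p \<Longrightarrow> i < n \<Longrightarrow> sel_value t a i < p"
  unfolding sel_value_def shift_vec_def advice_index_def vecs_def using p2 by (auto simp: subset_iff)

lemma consistent_unique:
  assumes o: "(t, a) \<in> advice_index n p" "(t, a') \<in> advice_index n p" and lq: "length q = k"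
    and c: "consistent q t a" "consistent q t a'"
  shows "a = a'"
proof -
  have s: "sel_value t a i = sel_value t a' i" if i: "i < n" for i
  proof -
    have "q ! sel_pos i (sel_value t a i) = True" using consistent_iff[OF o(1) lq] c(1) i sel_value_less[OF o(1) i] by simp
    moreover have "q ! sel_pos i (sel_value t a i) = (sel_value t a i = sel_value t a' i)"
      using consistent_iff[OF o(2) lq] c(2) i sel_value_less[OF o(1) i] by simp
    ultimately show ?thesis by simp
  qed
  have la: "length a = n" "length a' = n" "set a \<subseteq> {..<p}" "set a' \<subseteq> {..<p}" "t \<in> {1..<p}"
    using o unfolding advice_index_def vecs_def by auto
  have u: "inv_mod p t \<le> p" using inv_mod_spec[OF pp la(5)] by simp
  show ?thesis
  proof (rule nth_equalityI)
    show "length a = length a'" using la by simp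
    fix i assume "i < length a"
    hence i: "i < n" using la by simp
    have ai: "a ! i < p" "a' ! i < p" using la i by (auto simp: subset_iff)
    show "a ! i = a' ! i"
    proof (cases "x ! i")
      case True
      hence "(a ! i + p - inv_mod p t) mod p = (a' ! i + p - inv_mod p t) mod p"
        using s[OF i] la i unfolding sel_value_def shift_vec_def by simp
      thus ?thesis using mod_shift_inj[OF ai u] by simp
    next
      case False
      thus ?thesis using s[OF i] unfolding sel_value_def by simp
    qed
  qed
qed

lemma consistent_exists:
  assumes o: "(t, a) \<in> advice_index n p" and lq: "length q = k" and c: "consistent q t a" and t': "t' \<in> {1..<p}"
  shows "\<exists>a'. (t', a') \<in> advice_index n p \<and> consistent q t' a'"
proof -
  define a' where "a' = map (\<lambda>i. if x ! i then (sel_value t a i + inv_mod p t') mod p else sel_value t a i) [0..<n]"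
  have u: "inv_mod p t' \<le> p" using inv_mod_spec[OF pp t'] by simp
  have o': "(t', a') \<in> advice_index n p"
    unfolding advice_index_def vecs_def a'_def using t' sel_value_less[OF o] p2 by (auto simp: subset_iff)
  have ss: "sel_value t' a' i = sel_value t a i" if i: "i < n" for i
  proof (cases "x ! i")
    case True
    have "sel_value t' a' i = ((sel_value t a i + inv_mod p t') mod p + p - inv_mod p t') mod p"
      unfolding sel_value_def shift_vec_def a'_def using True i by simp
    also have "\<dots> = sel_value t a i" by (rule mod_shift_back[OF sel_value_less[OF o i] u])
    finally show ?thesis .
  next
    case False
    then show ?thesis unfolding sel_value_def a'_def using i by simp
  qed
  have "consistent q t' a'"
    using consistent_iff[OF o lq] consistent_iff[OF o' lq] c ss by simp
  thus ?thesis using o' by blast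
qed

definition x_int :: "nat \<Rightarrow> int" where "x_int i = (if x ! i then 1 else 0)"

lemma line_point_cong:
  assumes o: "(t, a) \<in> advice_index n p" and i: "i < n"
  shows "int p dvd (int t * int (a ! i) - (x_int i + int t * int (sel_value t a i)))"
proof (cases "x ! i")
  case False
  then show ?thesis unfolding x_int_def sel_value_def by simp
next
  case True
  have t: "t \<in> {1..<p}" using o unfolding advice_index_def by simp
  define u where "u = inv_mod p t"
  have up: "u < p" "[t * u = 1] (mod p)" using inv_mod_spec[OF pp t] unfolding u_def by auto
  have ai: "a ! i < p" using o i unfolding advice_index_def vecs_def by (auto simp: subset_iff)
  define N where "N = a ! i + p - u"
  have sN: "sel_value t a i = N mod p" unfolding sel_value_def shift_vec_def N_def u_def using True o i
    unfolding advice_index_def vecs_def by simp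
  have intN: "int N = int (a ! i) + int p - int u" unfolding N_def using up by simp
  have Ndec: "int N = int p * int (N div p) + int (N mod p)"
    by (metis of_nat_add of_nat_mult div_mult_mod_eq mult.commute)
  have tu: "int p dvd int t * int u - 1"
  proof -
    have "[int (t * u) = int 1] (mod int p)" using up(2) cong_int_iff by blast
    thus ?thesis by (simp add: cong_iff_dvd_diff)
  qed
  have e: "int (N mod p) = int (a ! i) + int p - int u - int p * int (N div p)" using intN Ndec by simp
  have "int t * int (a ! i) - (x_int i + int t * int (sel_value t a i)) =
        (int t * int u - 1) + int p * (int t * int (N div p) - int t)"
    unfolding x_int_def sN e using True by (simp add: algebra_simps)
  thus ?thesis using tu by simp
qed

definition question_dir :: "bool list \<Rightarrow> nat \<Rightarrow> nat" where "question_dir q i = (LEAST c. q ! sel_pos i c)"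

lemma question_dir_eq:
  assumes o: "(t, a) \<in> advice_index n p" and lq: "length q = k" and c: "consistent q t a" and i: "i < n"
  shows "question_dir q i = sel_value t a i"
proof -
  have R: "\<forall>c<p. q ! sel_pos i c = (c = sel_value t a i)" using consistent_iff[OF o lq] c i by simp
  have sl: "sel_value t a i < p" by (rule sel_value_less[OF o i])
  show ?thesis unfolding question_dir_def
  proof (rule Least_equality)
    show "q ! sel_pos i (sel_value t a i)" using R sl by simp
    fix y assume "q ! sel_pos i y"
    show "sel_value t a i \<le> y"
    proof (rule ccontr)
      assume "\<not> sel_value t a i \<le> y"
      hence "y < sel_value t a i" by simp
      hence "y < p" "y \<noteq> sel_value t a i" using sl by auto
      thus False using R \<open>q ! sel_pos i y\<close> by simp
    qed
  qed
qed

end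

section \<open>Polynomials along the line through the input\<close>

lemma poly_synthetic_div_eq:
  fixes D :: "'a::comm_ring_1 poly"
  shows "poly D x = (x - c) * poly (synthetic_div D c) x + poly D c"
proof -
  have "poly ([:- c, 1:] * synthetic_div D c + [:poly D c:]) x = (x - c) * poly (synthetic_div D c) x + poly D c"
    by (simp add: algebra_simps)
  then show ?thesis unfolding synthetic_div_correct' .
qed

text \<open>Dividing out a root \<open>r\<close> keeps all other roots, since \<open>p\<close> does not divide \<open>t - r\<close> for
  distinct residues \<open>t, r\<close>.\<close>
lemma card_roots_mod_prime_le:
  fixes D :: "int poly" and p :: nat
  assumes "prime p" and "degree D \<le> n" and "\<not> int p dvd poly D 0"
  shows "card {t\<in>{1..<p}. int p dvd poly D (int t)} \<le> n"
  using assms(2,3)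
proof (induction n arbitrary: D)
  case 0
  then obtain c where "D = [:c:]" by (metis degree_eq_zeroE le_zero_eq)
  then show ?case using 0(2) by simp
next
  case (Suc n)
  define S where "S = {t\<in>{1..<p}. int p dvd poly D (int t)}"
  have "card S \<le> Suc n"
  proof (cases "S = {}")
    case False
    then obtain r where r: "r \<in> S" by blast
    define Q where "Q = synthetic_div D (int r)"
    have Dr: "int p dvd poly D (int r)" and "r < p" using r unfolding S_def by auto
    have "\<not> int p dvd poly Q 0"
    proof
      assume "int p dvd poly Q 0"
      then have "int p dvd (0 - int r) * poly Q 0 + poly D (int r)" using Dr by simp
      then show False using Suc.prems(2) poly_synthetic_div_eq[of D 0 "int r"] unfolding Q_def by simp
    qed
    then have IH: "card {t\<in>{1..<p}. int p dvd poly Q (int t)} \<le> n"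
      using Suc.prems(1) by (intro Suc.IH) (simp_all add: Q_def degree_synthetic_div)
    have "int p dvd poly Q (int t)" if t: "t \<in> S - {r}" for t
    proof -
      have "(int t - int r) * poly Q (int t) = poly D (int t) - poly D (int r)"
        using poly_synthetic_div_eq[of D "int t" "int r"] unfolding Q_def by simp
      then have "int p dvd (int t - int r) * poly Q (int t)" using t Dr unfolding S_def by simp
      moreover have "\<not> int p dvd (int t - int r)"
        using t \<open>r < p\<close> dvd_imp_le_int[of "int t - int r" "int p"] unfolding S_def by auto
      moreover have "prime (int p)" using assms(1) by simp
      ultimately show ?thesis using prime_dvd_mult_iff by blast
    qed
    then have sub: "S - {r} \<subseteq> {t\<in>{1..<p}. int p dvd poly Q (int t)}" unfolding S_def by blast
    have "card (S - {r}) \<le> n" using order_trans[OF card_mono[OF _ sub] IH] by simp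
    then show ?thesis using r unfolding S_def by (simp add: card_Diff_singleton)
  qed simp
  then show ?case unfolding S_def .
qed

lemma concat_map_nth:
  "i < length xs \<Longrightarrow> c < p \<Longrightarrow> concat (map (\<lambda>y. map (g y) [0..<p]) xs) ! (i * p + c) = g (xs ! i) c"
proof (induction xs arbitrary: i)
  case Nil
  then show ?case by simp
next
  case (Cons y xs)
  show ?case
  proof (cases i)
    case 0
    then show ?thesis using Cons.prems by (simp add: nth_append)
  next
    case (Suc i')
    have "Suc i' * p + c = p + (i' * p + c)" by simp
    then show ?thesis using Cons Suc by (simp add: nth_append)
  qed
qed

lemma length_concat_map: "length (concat (map (\<lambda>y. map (g y) [0..<p]) xs)) = length xs * p"
  by (induction xs) simp_all

lemma sum_less_indicator: "(\<Sum>c<p. if c < h then (1::int) else 0) = int (min h p)"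
  by (induction p) (auto simp: min_def)

lemma poly_eq_sum_coeff_le:
  fixes F :: "int poly"
  assumes "degree F \<le> N"
  shows "poly F t = (\<Sum>i\<le>N. coeff F i * t ^ i)"
proof -
  have "poly F t = (\<Sum>i\<le>degree F. coeff F i * t ^ i)" by (rule poly_altdef)
  also have "\<dots> = (\<Sum>i\<le>N. coeff F i * t ^ i)"
    by (rule sum.mono_neutral_left) (use assms in \<open>auto simp: coeff_eq_0\<close>)
  finally show ?thesis .
qed

lemma finite_length_slice: "finite {s\<in>(L :: bool list set). length s = n}"
proof -
  have sub: "{s\<in>L. length s = n} \<subseteq> {s. set s \<subseteq> (UNIV :: bool set) \<and> length s = n}" by auto
  show ?thesis by (rule finite_subset[OF sub]) (rule finite_lists_length_eq, simp)
qed

context prime_protocol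
begin

definition line_poly :: "(nat \<Rightarrow> nat) \<Rightarrow> int poly" where
  "line_poly d = (\<Sum>s\<in>{s\<in>L. length s = n}. \<Prod>i<n. if s ! i then [:x_int i, int (d i):] else [:1 - x_int i, - int (d i):])"

lemma poly_line_poly: "poly (line_poly d) \<tau> = mlext L n (\<lambda>i. x_int i + \<tau> * int (d i))"
  unfolding line_poly_def mlext_def poly_sum poly_prod
  by (intro sum.cong refl prod.cong) (simp_all add: algebra_simps)

lemma degree_line_poly: "degree (line_poly d) \<le> n"
  unfolding line_poly_def
proof (rule degree_sum_le)
  fix s
  have "degree (\<Prod>i<n. if s ! i then [:x_int i, int (d i):] else [:1 - x_int i, - int (d i):])
        \<le> (\<Sum>i<n. degree (if s ! i then [:x_int i, int (d i):] else [:1 - x_int i, - int (d i):]))"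
    by (rule degree_prod_sum_le[unfolded o_def]) simp
  also have "\<dots> \<le> (\<Sum>i<n. 1)" by (intro sum_mono) auto
  finally show "degree (\<Prod>i<n. if s ! i then [:x_int i, int (d i):] else [:1 - x_int i, - int (d i):]) \<le> n" by simp
qed (rule finite_length_slice)

lemma mlext_x: "mlext L n x_int = (if x \<in> L then 1 else 0)"
proof -
  have "(\<Prod>i<n. if s ! i then x_int i else 1 - x_int i) = (\<Prod>i<n. if s ! i = x ! i then 1 else 0)" for s
    unfolding x_int_def by (intro prod.cong refl) auto
  moreover have "s = x \<longleftrightarrow> (\<forall>i<n. s ! i = x ! i)" if "length s = n" for s
    using that lx by (auto simp: list_eq_iff_nth_eq)
  ultimately have "mlext L n x_int = (\<Sum>s\<in>{s\<in>L. length s = n}. if s = x then 1 else 0)"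
    unfolding mlext_def by (intro sum.cong refl) (simp add: prod_indicator)
  then show ?thesis using lx finite_length_slice[of L n] by simp
qed

lemma poly_line_poly_0: "poly (line_poly d) 0 = (if x \<in> L then 1 else 0)"
  unfolding poly_line_poly by (simp add: mlext_x[symmetric])

lemma mlext_cong:
  assumes "\<forall>i<n. int p dvd (y i - y' i)"
  shows "int p dvd (mlext L n y - mlext L n y')"
proof -
  have "[mlext L n y = mlext L n y'] (mod int p)"
    unfolding mlext_def
  proof (intro cong_sum cong_prod)
    fix s i assume "i \<in> {..<n}"
    hence "[y i = y' i] (mod int p)" using assms by (simp add: cong_iff_dvd_diff)
    thus "[(if s ! i then y i else 1 - y i) = (if s ! i then y' i else 1 - y' i)] (mod int p)"
      by (simp add: cong_diff)
  qed
  thus ?thesis by (simp add: cong_iff_dvd_diff)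
qed

lemma mlext_mod_cong_line_poly:
  assumes o: "(t, a) \<in> advice_index n p" and lq: "length q = k" and c: "consistent q t a"
  shows "int p dvd (mlext_mod L n p t a - poly (line_poly (question_dir q)) (int t))"
proof -
  have h1: "int p dvd (mlext L n (\<lambda>i. int t * int (a ! i)) - mlext L n (\<lambda>i. x_int i + int t * int (question_dir q i)))"
    by (rule mlext_cong) (use line_point_cong[OF o] question_dir_eq[OF o lq c] in auto)
  have h2: "int p dvd (mlext_mod L n p t a - mlext L n (\<lambda>i. int t * int (a ! i)))"
    unfolding mlext_mod_def by (simp add: mod_eq_dvd_iff[symmetric])
  have "int p dvd (mlext_mod L n p t a - mlext L n (\<lambda>i. int t * int (a ! i))) + (mlext L n (\<lambda>i. int t * int (a ! i)) - mlext L n (\<lambda>i. x_int i + int t * int (question_dir q i)))"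
    by (rule dvd_add[OF h2 h1])
  thus ?thesis unfolding poly_line_poly by simp
qed

definition answer_coeff :: "bool list \<Rightarrow> nat \<Rightarrow> int" where
  "answer_coeff r i = (\<Sum>c<p. if r ! (i * p + c) then 1 else 0)"

lemma answer_value_eq: "answer_value n p r t = (\<Sum>i<n. answer_coeff r i * int t ^ (i + 1))"
  unfolding answer_value_def answer_coeff_def sum_distrib_right by (intro sum.cong refl) simp

definition diff_poly :: "bool list \<Rightarrow> (nat \<Rightarrow> nat) \<Rightarrow> int poly" where
  "diff_poly r d = 1 + (\<Sum>i<n. monom (answer_coeff r i) (Suc i)) - line_poly d"

lemma poly_diff_poly: "poly (diff_poly r d) (int t) = 1 + answer_value n p r t - poly (line_poly d) (int t)"
  unfolding diff_poly_def answer_value_eq by (simp add: poly_sum poly_monom)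

lemma poly_diff_poly_0: "poly (diff_poly r d) 0 = 1 - (if x \<in> L then 1 else 0)"
  unfolding diff_poly_def by (simp add: poly_sum poly_monom poly_line_poly_0)

lemma degree_diff_poly: "degree (diff_poly r d) \<le> n"
proof -
  have a: "degree (\<Sum>i<n. monom (answer_coeff r i) (Suc i)) \<le> n"
    by (rule degree_sum_le) (auto intro: order.trans[OF degree_monom_le])
  have "degree (1 + (\<Sum>i<n. monom (answer_coeff r i) (Suc i))) \<le> n"
    using a by (intro degree_add_le) auto
  thus ?thesis unfolding diff_poly_def using degree_line_poly by (intro degree_diff_le) auto
qed

definition accepting :: "nat \<Rightarrow> nat list \<Rightarrow> bool list \<Rightarrow> bool" where
  "accepting t a r \<longleftrightarrow> int p dvd (1 - mlext_mod L n p t a + answer_value n p r t)"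

lemma accepting_iff:
  assumes o: "(t, a) \<in> advice_index n p" and lq: "length q = k" and c: "consistent q t a"
  shows "accepting t a r \<longleftrightarrow> int p dvd poly (diff_poly r (question_dir q)) (int t)"
proof -
  have e: "(1 - mlext_mod L n p t a + answer_value n p r t) = poly (diff_poly r (question_dir q)) (int t) - (mlext_mod L n p t a - poly (line_poly (question_dir q)) (int t))"
    unfolding poly_diff_poly by simp
  have B: "int p dvd (mlext_mod L n p t a - poly (line_poly (question_dir q)) (int t))" by (rule mlext_mod_cong_line_poly[OF o lq c])
  show ?thesis unfolding accepting_def e
  proof
    assume "int p dvd poly (diff_poly r (question_dir q)) (int t) - (mlext_mod L n p t a - poly (line_poly (question_dir q)) (int t))"
    from dvd_add[OF this B] show "int p dvd poly (diff_poly r (question_dir q)) (int t)" by simp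
  next
    assume "int p dvd poly (diff_poly r (question_dir q)) (int t)"
    from dvd_diff[OF this B] show "int p dvd poly (diff_poly r (question_dir q)) (int t) - (mlext_mod L n p t a - poly (line_poly (question_dir q)) (int t))" .
  qed
qed

definition honest_coeff :: "bool list \<Rightarrow> nat \<Rightarrow> nat" where
  "honest_coeff q i = nat (coeff (line_poly (question_dir q)) (Suc i) mod int p)"

definition honest_prover :: "bool list \<Rightarrow> bool list" where
  "honest_prover q = concat (map (\<lambda>i. map (\<lambda>c. c < honest_coeff q i) [0..<p]) [0..<n])"

lemma length_honest_prover: "length (honest_prover q) = n * p"
  unfolding honest_prover_def by (simp add: length_concat_map)

lemma answer_coeff_honest_prover: "i < n \<Longrightarrow> answer_coeff (honest_prover q) i = coeff (line_poly (question_dir q)) (Suc i) mod int p"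
proof -
  assume i: "i < n"
  have hl: "honest_coeff q i \<le> p"
  proof -
    have "coeff (line_poly (question_dir q)) (Suc i) mod int p < int p" using p2 by simp
    thus ?thesis unfolding honest_coeff_def by simp
  qed
  have "answer_coeff (honest_prover q) i = (\<Sum>c<p. if c < honest_coeff q i then 1 else 0)"
    unfolding answer_coeff_def honest_prover_def
    using concat_map_nth[of i "[0..<n]" _ p "\<lambda>i c. c < honest_coeff q i"] i by (intro sum.cong refl) simp
  also have "\<dots> = int (min (honest_coeff q i) p)" by (rule sum_less_indicator)
  also have "min (honest_coeff q i) p = honest_coeff q i" using hl by simp
  also have "\<dots> = coeff (line_poly (question_dir q)) (Suc i) mod int p" unfolding honest_coeff_def using p2 by simp
  finally show ?thesis .
qed

lemma honest_prover_root:
  assumes xL: "x \<in> L"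
  shows "int p dvd poly (diff_poly (honest_prover q) (question_dir q)) (int t)"
proof -
  define F where "F = line_poly (question_dir q)"
  have amp_scale: "coeff F 0 = 1" using poly_line_poly_0[of "question_dir q"] xL unfolding F_def by (simp add: poly_0_coeff_0)
  have pF: "poly F (int t) = coeff F 0 + (\<Sum>i<n. coeff F (Suc i) * int t ^ (Suc i))"
  proof -
    have "poly F (int t) = (\<Sum>i\<le>n. coeff F i * int t ^ i)" using degree_line_poly unfolding F_def by (rule poly_eq_sum_coeff_le)
    also have "\<dots> = (\<Sum>i<Suc n. coeff F i * int t ^ i)" by (simp add: lessThan_Suc_atMost)
    also have "\<dots> = coeff F 0 + (\<Sum>i<n. coeff F (Suc i) * int t ^ (Suc i))" by (subst sum.lessThan_Suc_shift) simp
    finally show ?thesis .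
  qed
  have "poly (diff_poly (honest_prover q) (question_dir q)) (int t) = (\<Sum>i<n. (answer_coeff (honest_prover q) i - coeff F (Suc i)) * int t ^ (Suc i))"
    unfolding poly_diff_poly answer_value_eq F_def[symmetric] pF amp_scale by (simp add: sum_subtractf algebra_simps)
  also have "int p dvd \<dots>"
  proof (rule dvd_sum)
    fix i assume "i \<in> {..<n}"
    hence "answer_coeff (honest_prover q) i = coeff F (Suc i) mod int p" using answer_coeff_honest_prover unfolding F_def by simp
    hence "int p dvd (answer_coeff (honest_prover q) i - coeff F (Suc i))" by (simp add: mod_eq_dvd_iff[symmetric])
    thus "int p dvd (answer_coeff (honest_prover q) i - coeff F (Suc i)) * int t ^ Suc i" by simp
  qed
  finally show ?thesis .
qed

end

context prime_protocol
begin

lemma norm_post_v1_sq: "length q = k \<Longrightarrow> (cmod (post_v1 (t, a) q))\<^sup>2 = (if consistent q t a then erase_weight else 0)"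
proof -
  assume lq: "length q = k"
  show ?thesis
  proof (cases "consistent q t a")
    case True
    hence "\<forall>m<k. \<not> erased m \<longrightarrow> q ! m = honest_word (t, a) ! m" unfolding consistent_def .
    thus ?thesis using norm_prod_v1_factor_sq[OF lq, of "honest_word (t, a)"] True by simp
  next
    case False
    hence nc: "\<not> (\<forall>m<k. \<not> erased m \<longrightarrow> q ! m = honest_word (t, a) ! m)" unfolding consistent_def .
    have "(cmod (post_v1 (t, a) q))\<^sup>2 = erase_weight * (if \<forall>m<k. \<not> erased m \<longrightarrow> q ! m = honest_word (t, a) ! m then 1 else 0)"
      by (rule norm_prod_v1_factor_sq[OF lq])
    also have "(if \<forall>m<k. \<not> erased m \<longrightarrow> q ! m = honest_word (t, a) ! m then 1 else 0) = (0::real)"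
      by (simp only: if_not_P[OF nc])
    finally show ?thesis using False by simp
  qed
qed

lemma post_v1_zero: "length q = k \<Longrightarrow> \<not> consistent q t a \<Longrightarrow> post_v1 (t, a) q = 0"
  using norm_post_v1_sq[of q t a] by simp

text \<open>The sum over \<open>j\<close> is the inverse Fourier transform at frequency \<open>0\<close>: it keeps exactly the
  advice terms with \<open>1 + h(t) = f (t a)\<close> modulo \<open>p\<close>.\<close>
lemma sum_phased_amp:
  "(\<Sum>j<p. phased_amp q r t j) =
    (\<Sum>a\<in>vecs n p. advice_amp n p * post_v1 (t, a) q * (if accepting t a r then of_nat p else 0))"
proof -
  have "(\<Sum>j<p. phased_amp q r t j) = (\<Sum>a\<in>vecs n p. \<Sum>j<p. advice_amp n p * post_v1 (t, a) q *
      unit_root p (int j * (1 - mlext_mod L n p t a + answer_value n p r t)))"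
    unfolding phased_amp_def grid_amp_def sum_distrib_left
    by (subst sum.swap) (intro sum.cong refl, simp add: unit_root_add[symmetric] algebra_simps)
  also have "\<dots> = (\<Sum>a\<in>vecs n p. advice_amp n p * post_v1 (t, a) q * (if accepting t a r then of_nat p else 0))"
    using sum_unit_root_pow[of p] p2 unfolding accepting_def by (simp add: sum_distrib_left[symmetric])
  finally show ?thesis .
qed

lemma norm_final_amp_sq:
  assumes lq: "length q = k" and t: "t \<in> {1..<p}"
  shows "(cmod (of_real (1 / sqrt (real p)) * (\<Sum>j<p. phased_amp q r t j)))\<^sup>2 =
         (1 / (real (p - 1) * real p ^ n)) * (\<Sum>a\<in>vecs n p. if consistent q t a \<and> accepting t a r then erase_weight else 0)"
proof -
  define f where "f = (\<lambda>a. of_real (1 / sqrt (real p)) * advice_amp n p * post_v1 (t, a) q * (if accepting t a r then of_nat p else 0))"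
  have s2: "of_real (1 / sqrt (real p)) * (\<Sum>j<p. phased_amp q r t j) = (\<Sum>a\<in>vecs n p. f a)"
    unfolding sum_phased_amp f_def sum_distrib_left by (simp add: mult_ac)
  have uniq: "\<forall>a\<in>vecs n p. \<forall>b\<in>vecs n p. f a \<noteq> 0 \<longrightarrow> f b \<noteq> 0 \<longrightarrow> a = b"
  proof (intro ballI impI)
    fix a b assume ab: "a \<in> vecs n p" "b \<in> vecs n p" "f a \<noteq> 0" "f b \<noteq> 0"
    have "consistent q t a" using ab(3) post_v1_zero[OF lq] unfolding f_def by auto
    moreover have "consistent q t b" using ab(4) post_v1_zero[OF lq] unfolding f_def by auto
    moreover have "(t, a) \<in> advice_index n p" "(t, b) \<in> advice_index n p" using ab t unfolding advice_index_def by auto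
    ultimately show "a = b" using consistent_unique lq by blast
  qed
  have fa: "(cmod (f a))\<^sup>2 = (1 / (real (p - 1) * real p ^ n)) * (if consistent q t a \<and> accepting t a r then erase_weight else 0)" for a
  proof -
    have n1: "cmod (of_real (1 / sqrt (real p))) = 1 / sqrt (real p)" by (simp only: norm_of_real) simp
    have n2: "(cmod (if accepting t a r then of_nat p else (0::complex)))\<^sup>2 = (if accepting t a r then (real p)\<^sup>2 else 0)"
      by (cases "accepting t a r") simp_all
    have "(cmod (f a))\<^sup>2 = (1 / sqrt (real p))\<^sup>2 * (cmod (advice_amp n p))\<^sup>2 * (cmod (post_v1 (t, a) q))\<^sup>2 * (if accepting t a r then (real p)\<^sup>2 else 0)"
      unfolding f_def norm_mult power_mult_distrib n1 n2 ..
    also have "\<dots> = (1 / real p) * (1 / (real (p - 1) * real p ^ (n + 1))) * (if consistent q t a then erase_weight else 0) * (if accepting t a r then (real p)\<^sup>2 else 0)"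
      unfolding norm_advice_amp_sq[OF p2] norm_post_v1_sq[OF lq] using p2 by (simp add: power_divide)
    also have "\<dots> = (1 / (real (p - 1) * real p ^ n)) * (if consistent q t a \<and> accepting t a r then erase_weight else 0)"
      using p2 by (auto simp: power2_eq_square field_simps)
    finally show ?thesis .
  qed
  have "(cmod (of_real (1 / sqrt (real p)) * (\<Sum>j<p. phased_amp q r t j)))\<^sup>2 = (cmod (\<Sum>a\<in>vecs n p. f a))\<^sup>2"
    by (simp only: s2)
  also have "\<dots> = (\<Sum>a\<in>vecs n p. (cmod (f a))\<^sup>2)" by (rule norm_sum_sq_single_support[OF finite_vecs uniq])
  also have "\<dots> = (1 / (real (p - 1) * real p ^ n)) * (\<Sum>a\<in>vecs n p. if consistent q t a \<and> accepting t a r then erase_weight else 0)"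
    unfolding fa sum_distrib_left ..
  finally show ?thesis .
qed

end

section \<open>Completeness and soundness\<close>

lemma sum_if_const: "finite A \<Longrightarrow> (\<Sum>a\<in>A. if P a then (c::real) else 0) = c * real (card {a\<in>A. P a})"
  by (simp add: sum.If_cases Int_def)

context prime_protocol
begin

definition amp_scale :: real where "amp_scale = 1 / (real (p - 1) * real p ^ n)"

lemma erase_weight_nonneg: "erase_weight \<ge> 0" unfolding erase_weight_def by (intro prod_nonneg) auto

lemma amp_scale_nonneg: "amp_scale \<ge> 0" unfolding amp_scale_def by simp

lemma acc_prob_eq_sum_accepting:
  "acc_prob (2 * n * p + p * p) 1 k (n * p) (advice L n p) (verifier1 n p) (verifier2 n p) x P =
   (\<Sum>q\<in>{q. length q = k}. if length (P q) = n * p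
        then amp_scale * (\<Sum>t\<in>{1..<p}. \<Sum>a\<in>vecs n p. if consistent q t a \<and> accepting t a (P q) then erase_weight else 0) else 0)"
  unfolding acc_prob_formula
proof (intro sum.cong refl)
  fix q :: "bool list" assume "q \<in> {q. length q = k}"
  hence lq: "length q = k" by simp
  show "(if length (P q) = n * p then \<Sum>t\<in>{1..<p}. (cmod (complex_of_real (1 / sqrt (real p)) * (\<Sum>j<p. phased_amp q (P q) t j)))\<^sup>2 else 0) =
        (if length (P q) = n * p then amp_scale * (\<Sum>t\<in>{1..<p}. \<Sum>a\<in>vecs n p. if consistent q t a \<and> accepting t a (P q) then erase_weight else 0) else 0)"
  proof (cases "length (P q) = n * p")
    case True
    have "(\<Sum>t\<in>{1..<p}. (cmod (complex_of_real (1 / sqrt (real p)) * (\<Sum>j<p. phased_amp q (P q) t j)))\<^sup>2) =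
          (\<Sum>t\<in>{1..<p}. amp_scale * (\<Sum>a\<in>vecs n p. if consistent q t a \<and> accepting t a (P q) then erase_weight else 0))"
      unfolding amp_scale_def by (intro sum.cong refl) (rule norm_final_amp_sq[OF lq], simp)
    also have "\<dots> = amp_scale * (\<Sum>t\<in>{1..<p}. \<Sum>a\<in>vecs n p. if consistent q t a \<and> accepting t a (P q) then erase_weight else 0)"
      by (simp only: sum_distrib_left)
    finally show ?thesis using True by simp
  next
    case False
    then show ?thesis by simp
  qed
qed

lemma sum_consistent_weight: "(t, a) \<in> advice_index n p \<Longrightarrow> (\<Sum>q\<in>{q. length q = k}. if consistent q t a then erase_weight else 0) = 1"
proof -
  assume "(t, a) \<in> advice_index n p"
  have "(\<Sum>q\<in>{q. length q = k}. if consistent q t a then erase_weight else 0) = (\<Sum>q\<in>{q. length q = k}. (cmod (post_v1 (t, a) q))\<^sup>2)"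
    by (intro sum.cong refl) (simp add: norm_post_v1_sq)
  also have "\<dots> = 1" by (rule sum_norm_prod_v1_factor_sq)
  finally show ?thesis .
qed

lemma sum_questions_consistent_weight:
  assumes "t \<in> {1..<p}"
  shows "(\<Sum>q\<in>{q. length q = k}. \<Sum>a\<in>vecs n p. if consistent q t a then erase_weight else 0) = real p ^ n"
proof -
  have "(\<Sum>q\<in>{q. length q = k}. \<Sum>a\<in>vecs n p. if consistent q t a then erase_weight else 0)
      = (\<Sum>a\<in>vecs n p. \<Sum>q\<in>{q. length q = k}. if consistent q t a then erase_weight else 0)"
    by (rule sum.swap)
  also have "\<dots> = (\<Sum>a\<in>vecs n p. 1)"
    using sum_consistent_weight assms unfolding advice_index_def by (intro sum.cong refl) auto
  finally show ?thesis by (simp add: card_vecs)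
qed

theorem completeness:
  assumes "x \<in> L"
  shows "acc_prob (2 * n * p + p * p) 1 k (n * p) (advice L n p) (verifier1 n p) (verifier2 n p) x honest_prover = 1"
proof -
  have honest: "accepting t a (honest_prover q)"
    if "length q = k" "t \<in> {1..<p}" "a \<in> vecs n p" "consistent q t a" for q t a
    using that accepting_iff[of t a q] honest_prover_root[OF assms] unfolding advice_index_def by simp
  have inner: "(\<Sum>t\<in>{1..<p}. \<Sum>a\<in>vecs n p. if consistent q t a \<and> accepting t a (honest_prover q) then erase_weight else 0)
      = (\<Sum>t\<in>{1..<p}. \<Sum>a\<in>vecs n p. if consistent q t a then erase_weight else 0)" if "length q = k" for q
    using honest[OF that] by (intro sum.cong refl) auto
  have "acc_prob (2 * n * p + p * p) 1 k (n * p) (advice L n p) (verifier1 n p) (verifier2 n p) x honest_prover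
      = (\<Sum>q\<in>{q. length q = k}. amp_scale * (\<Sum>t\<in>{1..<p}. \<Sum>a\<in>vecs n p. if consistent q t a then erase_weight else 0))"
    unfolding acc_prob_eq_sum_accepting using inner length_honest_prover by (intro sum.cong refl) simp
  also have "\<dots> = amp_scale * (\<Sum>t\<in>{1..<p}. \<Sum>q\<in>{q. length q = k}. \<Sum>a\<in>vecs n p. if consistent q t a then erase_weight else 0)"
    unfolding sum_distrib_left[symmetric] by (subst sum.swap) (rule refl)
  also have "\<dots> = amp_scale * (\<Sum>t\<in>{1..<p}. real p ^ n)"
    using sum_questions_consistent_weight by simp
  also have "\<dots> = 1" unfolding amp_scale_def using p2 by (simp add: of_nat_diff)
  finally show ?thesis .
qed

lemma card_consistent_accepting_le:
  assumes "length q = k" "t \<in> {1..<p}"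
  shows "card {a\<in>vecs n p. consistent q t a \<and> accepting t a r} \<le>
    (if int p dvd poly (diff_poly r (question_dir q)) (int t) then card {a\<in>vecs n p. consistent q 1 a} else 0)"
proof (cases "\<exists>a\<in>vecs n p. consistent q t a")
  case True
  then obtain a where a: "(t, a) \<in> advice_index n p" "consistent q t a"
    using assms(2) unfolding advice_index_def by blast
  have "\<forall>a\<in>{a\<in>vecs n p. consistent q t a \<and> accepting t a r}. \<forall>b\<in>{a\<in>vecs n p. consistent q t a \<and> accepting t a r}. a = b"
    using consistent_unique[of t _ _ q] assms unfolding advice_index_def by auto
  then have "card {a\<in>vecs n p. consistent q t a \<and> accepting t a r} \<le> 1"
    using card_le_Suc0_iff_eq[of "{a\<in>vecs n p. consistent q t a \<and> accepting t a r}"] finite_vecs by simp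
  moreover obtain a' where "(1, a') \<in> advice_index n p" "consistent q 1 a'"
    using consistent_exists[OF a(1) assms(1) a(2), of 1] p2 by auto
  then have "card {a\<in>vecs n p. consistent q 1 a} \<ge> 1"
    using finite_vecs unfolding advice_index_def by (auto simp: Suc_le_eq card_gt_0_iff)
  moreover have "card {a\<in>vecs n p. consistent q t a \<and> accepting t a r} = 0"
    if "\<not> int p dvd poly (diff_poly r (question_dir q)) (int t)"
  proof -
    have "{a\<in>vecs n p. consistent q t a \<and> accepting t a r} = {}"
      using that accepting_iff assms unfolding advice_index_def by auto
    then show ?thesis by (simp only: card.empty)
  qed
  ultimately show ?thesis by auto
next
  case False
  then have "{a\<in>vecs n p. consistent q t a \<and> accepting t a r} = {}" by auto
  then show ?thesis by (simp only: card.empty)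
qed

lemma accepting_weight_le:
  assumes "length q = k" and "x \<notin> L"
  shows "(\<Sum>t\<in>{1..<p}. \<Sum>a\<in>vecs n p. if consistent q t a \<and> accepting t a r then erase_weight else 0)
         \<le> real n * (\<Sum>a\<in>vecs n p. if consistent q 1 a then erase_weight else 0)"
proof -
  define D where "D = diff_poly r (question_dir q)"
  define c1 where "c1 = card {a\<in>vecs n p. consistent q 1 a}"
  have "(\<Sum>t\<in>{1..<p}. real (card {a\<in>vecs n p. consistent q t a \<and> accepting t a r}))
      \<le> (\<Sum>t\<in>{1..<p}. if int p dvd poly D (int t) then real c1 else 0)"
  proof (rule sum_mono)
    fix t assume "t \<in> {1..<p}"
    from card_consistent_accepting_le[OF assms(1) this, of r]
    show "real (card {a\<in>vecs n p. consistent q t a \<and> accepting t a r})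
        \<le> (if int p dvd poly D (int t) then real c1 else 0)"
      unfolding D_def c1_def by (simp split: if_splits)
  qed
  also have "\<dots> = real (card {t\<in>{1..<p}. int p dvd poly D (int t)}) * real c1"
    by (simp add: sum_if_const)
  also have "\<dots> \<le> real n * real c1"
    using card_roots_mod_prime_le[OF pp degree_diff_poly, of r "question_dir q"] poly_diff_poly_0 assms(2) p2
    unfolding D_def by (intro mult_right_mono) auto
  finally have "erase_weight * (\<Sum>t\<in>{1..<p}. real (card {a\<in>vecs n p. consistent q t a \<and> accepting t a r}))
      \<le> erase_weight * (real n * real c1)"
    by (rule mult_left_mono[OF _ erase_weight_nonneg])
  then show ?thesis
    unfolding c1_def by (simp add: sum_if_const finite_vecs sum_distrib_left[symmetric] mult_ac)
qed

theorem soundness: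
  assumes "x \<notin> L"
  shows "acc_prob (2 * n * p + p * p) 1 k (n * p) (advice L n p) (verifier1 n p) (verifier2 n p) x P
    \<le> real n / real (p - 1)"
proof -
  have "acc_prob (2 * n * p + p * p) 1 k (n * p) (advice L n p) (verifier1 n p) (verifier2 n p) x P
      \<le> (\<Sum>q\<in>{q. length q = k}. amp_scale * (real n * (\<Sum>a\<in>vecs n p. if consistent q 1 a then erase_weight else 0)))"
    unfolding acc_prob_eq_sum_accepting using accepting_weight_le[OF _ assms] erase_weight_nonneg amp_scale_nonneg
    by (intro sum_mono) (auto intro!: mult_left_mono mult_nonneg_nonneg sum_nonneg)
  also have "\<dots> = amp_scale * real n * real p ^ n"
    using sum_questions_consistent_weight[of 1] p2 by (simp add: sum_distrib_left[symmetric] mult_ac)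
  also have "\<dots> = real n / real (p - 1)" unfolding amp_scale_def using p2 by simp
  finally show ?thesis .
qed

end

section \<open>Size and validity of the verifier\<close>

lemma valid_verifier1:
  assumes "p \<ge> 2"
  shows "valid_circuit (n + (2 * n * p + p * p) + 1) (verifier1 n p)"
  unfolding valid_circuit_def
proof
  fix g assume "g \<in> set (verifier1 n p)"
  then obtain m where m: "n \<le> m" "m < n + 2 * n * p" and g: "g = (erase_ctrl n p m, m, ctrl_mat (erase_ctrl_val n p m) hadamard)"
    unfolding verifier1_def by auto
  have np: "n * p > 0" using m assms by (cases n) auto
  have "(m - n) mod (n * p) < n * p" using np by simp
  hence c: "erase_ctrl n p m < n" unfolding erase_ctrl_def using assms by (simp add: div_less_iff_less_mult)
  show "valid_gate (n + (2 * n * p + p * p) + 1) g"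
    unfolding g valid_gate_def using c m unitary_ctrl_hadamard by auto
qed

lemma valid_circuit_append: "valid_circuit m (C @ D) \<longleftrightarrow> valid_circuit m C \<and> valid_circuit m D"
  unfolding valid_circuit_def by auto

lemma valid_circuit_shift: "valid_circuit m C \<Longrightarrow> valid_circuit (k + m) (map (shift_gate k) C)"
  unfolding valid_circuit_def valid_gate_def shift_gate_def by (auto split: prod.splits)

lemma valid_verifier2_work:
  assumes "p \<ge> 2"
  shows "valid_circuit (p * p + 1 + n * p) (verifier2_work n p)"
proof -
  have "valid_gate (p * p + 1 + n * p) (phase_answer_qubit p z, phase_grid_qubit p z, diag_mat (phase_mat p z))"
    if "z \<in> set (phase_index n p)" for z
  proof -
    have "\<exists>i c j t. z = (i, c, j, t) \<and> i < n \<and> c < p \<and> j < p \<and> t < p"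
      using that unfolding phase_index_def by auto
    then obtain i c j t where z: "z = (i, c, j, t)" "i < n" "c < p" "j < p" "t < p" by blast
    have "unitary2 (diag_mat (phase_mat p z))" by (rule unitary_diag) (simp add: phase_mat_def z)
    then show ?thesis using block_index_less[of i n c p] grid_index_less[of j p t] z
      unfolding phase_answer_qubit_def phase_grid_qubit_def valid_gate_def by simp
  qed
  moreover have "valid_gate (p * p + 1 + n * p) g" if "g \<in> set (concat (map (row_gates p) [1..<p]))" for g
    using that grid_index_less unitary_givens[OF givens_cos_sin_sq] unfolding row_gates_def valid_gate_def
    by fastforce
  moreover have "valid_gate (p * p + 1 + n * p) (t, p * p, cnot_mat)" if "t \<in> {1..<p}" for t
    using that grid_index_less[of 1 p t] assms unitary_cnot unfolding valid_gate_def by simp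
  ultimately show ?thesis
    unfolding verifier2_work_def valid_circuit_append by (auto simp: valid_circuit_def)
qed

lemma valid_verifier2:
  assumes "p \<ge> 2"
  shows "valid_circuit (n + (2 * n * p + p * p) + 1 + n * p) (verifier2 n p)"
proof -
  have "n + (2 * n * p + p * p) + 1 + n * p = (n + 2 * n * p) + (p * p + 1 + n * p)" by simp
  then have "valid_circuit (n + (2 * n * p + p * p) + 1 + n * p) (map (shift_gate (n + 2 * n * p)) (verifier2_work n p))"
    using valid_circuit_shift[OF valid_verifier2_work[OF assms]] by presburger
  moreover have "valid_gate (n + (2 * n * p + p * p) + 1 + n * p) (0, n + 2 * n * p + p * p, swap_mat)"
    using unitary_swap assms unfolding valid_gate_def by auto
  ultimately show ?thesis
    unfolding verifier2_def valid_circuit_append by (simp add: valid_circuit_def)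
qed

definition protocol_prime :: "nat \<Rightarrow> nat" where
  "protocol_prime n = (SOME q. prime q \<and> 3 * (n + 1)^2 < q \<and> q \<le> 8 * (3 * (n + 1)^2)^2)"

lemma protocol_prime_bounds: "prime (protocol_prime n) \<and> 3 * (n + 1)^2 < protocol_prime n \<and> protocol_prime n \<le> 8 * (3 * (n + 1)^2)^2"
proof -
  have "3 * (n + 1)^2 \<ge> 1" by simp
  from exists_prime_between_square[OF this] show ?thesis unfolding protocol_prime_def by (rule someI_ex)
qed

lemma protocol_prime_ge_2: "protocol_prime n \<ge> 2" using protocol_prime_bounds[of n] prime_ge_2_nat by blast

lemma protocol_prime_le: "protocol_prime n \<le> (n + 2) ^ 11"
proof -
  have "protocol_prime n \<le> 8 * (3 * (n + 1)^2)^2" using protocol_prime_bounds by blast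
  also have "\<dots> = 72 * (n + 1)^4"
  proof -
    have "(3 * (n + 1)^2)^2 = 9 * (n + 1)^4" by (simp only: power_mult_distrib power_mult[symmetric]) simp
    thus ?thesis by simp
  qed
  also have "\<dots> \<le> (n + 2)^7 * (n + 2)^4"
  proof (rule mult_le_mono)
    have "(72::nat) \<le> 2^7" by simp
    also have "(2::nat)^7 \<le> (n + 2)^7" by (rule power_mono) simp_all
    finally show "72 \<le> (n + 2)^7" .
    show "(n + 1)^4 \<le> (n + 2)^4" by (rule power_mono) simp_all
  qed
  also have "\<dots> = (n + 2)^11" by (simp flip: power_add)
  finally show ?thesis .
qed

lemma protocol_prime_gt: "real (protocol_prime n - 1) \<ge> 3 * (real n + 1)^2"
proof -
  have "3 * (n + 1)^2 < protocol_prime n" using protocol_prime_bounds by blast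
  hence "3 * (n + 1)^2 \<le> protocol_prime n - 1" by simp
  hence "real (3 * (n + 1)^2) \<le> real (protocol_prime n - 1)" by (simp only: of_nat_le_iff)
  thus ?thesis by (simp add: add.commute)
qed

lemma poly_bounds:
  fixes n p P :: nat
  assumes "n \<le> P" "p \<le> P" "4 \<le> P"
  shows "2 * n * p + p * p \<le> P ^ 5" "n + 2 * n * p \<le> P ^ 5" "n * p \<le> P ^ 5"
        "2 * n * p \<le> P ^ 5" "n * p * p * p + p * p + p + 1 \<le> P ^ 5" "1 \<le> P ^ 5"
proof -
  have P1: "1 \<le> P" using assms by simp
  have q1: "P \<le> P ^ 4" using P1 by (simp add: power_increasing[of 1 4 P, simplified])
  have q2: "P * P \<le> P ^ 4" using P1 power_increasing[of 2 4 P] by (simp add: power2_eq_square)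
  have q0: "1 \<le> P ^ 4" using P1 by simp
  have np: "n * p \<le> P * P" using assms by (intro mult_le_mono) auto
  have pp: "p * p \<le> P * P" using assms by (intro mult_le_mono) auto
  have nppp: "n * p * p * p \<le> P ^ 4"
  proof -
    have "n * p * p * p \<le> P * P * P * P" using assms by (intro mult_le_mono) auto
    thus ?thesis by (simp add: power4_eq_xxxx)
  qed
  have "P ^ 5 = P * P ^ 4" by (simp add: numeral_eq_Suc)
  hence five: "4 * P ^ 4 \<le> P ^ 5" using mult_le_mono1[OF assms(3), of "P ^ 4"] by simp
  show "2 * n * p + p * p \<le> P ^ 5" using np pp q2 five by linarith
  show "n + 2 * n * p \<le> P ^ 5" using np q1 q2 five assms(1) by linarith
  show "n * p \<le> P ^ 5" using np q2 five by linarith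
  show "2 * n * p \<le> P ^ 5" using np q2 five by linarith
  show "n * p * p * p + p * p + p + 1 \<le> P ^ 5" using nppp pp q2 q1 q0 five assms(2) by linarith
  show "1 \<le> P ^ 5" using P1 by simp
qed

lemma length_verifier1: "length (verifier1 n p) = 2 * n * p"
  unfolding verifier1_def by simp

lemma length_verifier2: "length (verifier2 n p) = n * p * p * p + (p - 1) * (p - 1) + (p - 1) + 1"
proof -
  have "length (phase_index n p) = n * (p * (p * p))"
    unfolding phase_index_def by (simp add: length_concat o_def sum_list_triv)
  moreover have "length (concat (map (row_gates p) [1..<p])) = (p - 1) * (p - 1)"
    by (simp add: length_concat o_def sum_list_triv row_gates_def)
  ultimately show ?thesis unfolding verifier2_def verifier2_work_def by (simp add: mult.assoc)
qed

lemma protocol_sizes: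
  fixes n :: nat
  defines "p \<equiv> protocol_prime n"
  shows "2 * n * p + p * p \<le> (n + 2) ^ 55" "(1::nat) \<le> (n + 2) ^ 55" "n + 2 * n * p \<le> (n + 2) ^ 55"
        "n * p \<le> (n + 2) ^ 55" "length (verifier1 n p) \<le> (n + 2) ^ 55" "length (verifier2 n p) \<le> (n + 2) ^ 55"
proof -
  define P where "P = (n + 2) ^ 11"
  have e: "(n + 2) ^ 55 = P ^ 5" unfolding P_def by (simp flip: power_mult)
  have P4: "4 \<le> P"
  proof -
    have "(2::nat) ^ 11 \<le> (n + 2) ^ 11" by (rule power_mono) simp_all
    thus ?thesis unfolding P_def by simp
  qed
  have nP: "n \<le> P"
  proof -
    have "n \<le> n + 2" by simp
    also have "\<dots> = (n + 2) ^ 1" by simp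
    also have "\<dots> \<le> (n + 2) ^ 11" by (rule power_increasing) simp_all
    finally show ?thesis unfolding P_def .
  qed
  have pP: "p \<le> P" unfolding p_def P_def by (rule protocol_prime_le)
  note b = poly_bounds[OF nP pP P4]
  show "2 * n * p + p * p \<le> (n + 2) ^ 55" "(1::nat) \<le> (n + 2) ^ 55" "n + 2 * n * p \<le> (n + 2) ^ 55"
        "n * p \<le> (n + 2) ^ 55" using b unfolding e by simp_all
  show "length (verifier1 n p) \<le> (n + 2) ^ 55" using b unfolding e length_verifier1 by simp
  have "length (verifier2 n p) \<le> n * p * p * p + p * p + p + 1"
  proof -
    have "(p - 1) * (p - 1) \<le> p * p" by (intro mult_le_mono) simp_all
    thus ?thesis unfolding length_verifier2 by simp
  qed
  thus "length (verifier2 n p) \<le> (n + 2) ^ 55" using b unfolding e by simp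
qed

lemma soundness_error_le:
  fixes n :: nat
  shows "real n / real (protocol_prime n - 1) \<le> 1 / (3 * (real n + 1))"
proof -
  have l: "real (protocol_prime n - 1) \<ge> 3 * (real n + 1)^2" by (rule protocol_prime_gt)
  have pos: "3 * (real n + 1)^2 > 0" by simp
  have "real n / real (protocol_prime n - 1) \<le> real n / (3 * (real n + 1)^2)"
  proof (rule divide_left_mono)
    show "3 * (real n + 1)^2 \<le> real (protocol_prime n - 1)" by (rule l)
    show "0 \<le> real n" by simp
    have "real (protocol_prime n - 1) > 0" using l pos by linarith
    thus "0 < real (protocol_prime n - 1) * (3 * (real n + 1)^2)" using pos by simp
  qed
  also have "\<dots> \<le> (real n + 1) / (3 * (real n + 1)^2)"
    using pos by (intro divide_right_mono) auto
  also have "\<dots> = 1 / (3 * (real n + 1))" by (simp add: power2_eq_square)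
  finally show ?thesis .
qed

lemma protocol_well_formed:
  fixes n :: nat
  defines "p \<equiv> protocol_prime n"
  shows "2 * n * p + p * p \<le> (n + 2) ^ 55 \<and> 1 \<le> (n + 2) ^ 55 \<and> n + 2 * n * p \<le> (n + 2) ^ 55
    \<and> n * p \<le> (n + 2) ^ 55 \<and> length (verifier1 n p) \<le> (n + 2) ^ 55 \<and> length (verifier2 n p) \<le> (n + 2) ^ 55
    \<and> n + 2 * n * p \<le> n + (2 * n * p + p * p) + 1
    \<and> is_state (2 * n * p + p * p) (advice L n p)
    \<and> valid_circuit (n + (2 * n * p + p * p) + 1) (verifier1 n p)
    \<and> valid_circuit (n + (2 * n * p + p * p) + 1 + n * p) (verifier2 n p)"
  using protocol_sizes is_state_advice[OF protocol_prime_ge_2] valid_verifier1[OF protocol_prime_ge_2]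
    valid_verifier2[OF protocol_prime_ge_2]
  unfolding p_def by simp

lemma protocol_complete:
  fixes x :: "bool list"
  defines "n \<equiv> length x" and "p \<equiv> protocol_prime (length x)"
  assumes "x \<in> L"
  shows "\<exists>P. acc_prob (2 * n * p + p * p) 1 (n + 2 * n * p) (n * p) (advice L n p)
    (verifier1 n p) (verifier2 n p) x P = 1"
proof -
  interpret prime_protocol n p x L
    unfolding n_def p_def by unfold_locales (simp_all add: protocol_prime_ge_2 protocol_prime_bounds)
  show ?thesis using completeness[OF assms(3)] by blast
qed

lemma protocol_sound:
  fixes x :: "bool list"
  defines "n \<equiv> length x" and "p \<equiv> protocol_prime (length x)"
  assumes "x \<notin> L"
  shows "acc_prob (2 * n * p + p * p) 1 (n + 2 * n * p) (n * p) (advice L n p)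
    (verifier1 n p) (verifier2 n p) x P \<le> 1 / (3 * (real n + 1))"
proof -
  interpret prime_protocol n p x L
    unfolding n_def p_def by unfold_locales (simp_all add: protocol_prime_ge_2 protocol_prime_bounds)
  show ?thesis
    using order_trans[OF soundness[OF assms(3)] soundness_error_le[of "length x", folded p_def, folded n_def]] .
qed

theorem mainTheorem1:
  fixes L :: "bool list set"
  shows "\<exists>c::real. c > 0 \<and> (\<exists>s. (\<forall>n. s n \<le> 1 / 3)
           \<and> (\<forall>\<^sub>F n in sequentially. s n \<le> real n powr (- c))
           \<and> QIP2star_qpoly_perfect s L)"
proof -
  define s where "s n = 1 / (3 * (real n + 1))" for n :: nat
  have "QIP2star_qpoly_perfect s L"
    unfolding QIP2star_qpoly_perfect_def s_def
  proof (rule exI[of _ 55],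
      rule exI[of _ "\<lambda>n. 2 * n * protocol_prime n + protocol_prime n * protocol_prime n"],
      rule exI[of _ "\<lambda>_. 1"], rule exI[of _ "\<lambda>n. n + 2 * n * protocol_prime n"],
      rule exI[of _ "\<lambda>n. n * protocol_prime n"], rule exI[of _ "\<lambda>n. advice L n (protocol_prime n)"],
      rule exI[of _ "\<lambda>n. verifier1 n (protocol_prime n)"],
      rule exI[of _ "\<lambda>n. verifier2 n (protocol_prime n)"])
  qed (intro protocol_well_formed protocol_complete protocol_sound conjI allI ballI impI)
  moreover have "s n \<le> 1 / 3" for n
    unfolding s_def by (simp add: field_simps)
  moreover have "\<forall>\<^sub>F n in sequentially. s n \<le> real n powr (- 1)"
  proof (rule eventually_sequentiallyI[of 1])
    fix n :: nat assume "n \<ge> 1"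
    then show "s n \<le> real n powr (- 1)"
      unfolding s_def by (simp add: powr_minus_divide field_simps)
  qed
  ultimately show ?thesis by (intro exI[of _ 1]) auto
qed

end
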